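(* Consider the SEIRUC system \[ \begin{aligned} S'(t)&=\Lambda-\frac{\beta S(t)}{N(t)}\bigl(I(t)+U(t)+R(t)\bigr)-\delta S(t),\\ E'(t)&=\frac{\beta S(t)}{N(t)}\bigl(I(t)+U(t)+R(t)\bigr)-(a+\delta_1+c_1)E(t),\\ I'(t)&=aE(t)-(\gamma+\delta_2+c_2)I(t),\\ R'(t)&=\gamma q I(t)-(\delta_3+c_3)R(t)+\eta U(t),\\ U'(t)&=\gamma(1-q)I(t)-(\delta_4+c_4)U(t)-\eta U(t),\\ C'(t)&=c_1E(t)+c_2I(t)+c_3R(t)+c_4U(t)-\delta_5C(t), \end{aligned} \] where $N(t)=S(t)+E(t)+I(t)+R(t)+U(t)+C(t)$. Let $\theta_1=a+\delta_1+c_1$, $\theta_2=\gamma+\delta_2+c_2$, $\theta_3=\delta_3+c_3$, $\theta_4=\delta_4+c_4+\eta$, $\mathcal{P}=\gamma(1-q)(\eta+\theta_3)+\theta_4(\theta_3+q\gamma)$, and \[ \mathcal{R}_0=\frac{a\beta\Lambda\mathcal{P}}{N\delta\theta_1\theta_2\theta_3\theta_4}, \] where $N=\Lambda/\delta$ is the total population at the disease-free equilibrium (so $\mathcal{R}_0=\frac{a\beta\mathcal{P}}{\theta_1\theta_2\theta_3\theta_4}$). Then the disease-free equilibrium $\mathcal{E}_0=(\Lambda/\delta,0,0,0,0,0)$ is locally asymptotically stable if $\mathcal{R}_0<1$ and unstable if $\mathcal{R}_0>1$.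
   Context: All parameters $\Lambda,\beta,\delta,a,\gamma,\eta,\delta_1,\dots,\delta_5,c_1,\dots,c_4$ are positive constants and $q\in[0,1]$. $\mathcal{R}_0$ is the basic reproduction number, obtained as the spectral radius of the next-generation matrix. *)

theory Defs
  imports "HOL-Analysis.Analysis"
begin

type_synonym state = "real \<times> real \<times> real \<times> real \<times> real \<times> real"
  \<comment> \<open>(S, E, I, R, U, C)\<close>

definition seiruc_rhs ::
  "real \<Rightarrow> real \<Rightarrow> real \<Rightarrow> real \<Rightarrow> real \<Rightarrow> real \<Rightarrow> real \<Rightarrow> real \<Rightarrow> real \<Rightarrow> real \<Rightarrow> real \<Rightarrow>
   real \<Rightarrow> real \<Rightarrow> real \<Rightarrow> real \<Rightarrow> real \<Rightarrow> state \<Rightarrow> state" where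
  "seiruc_rhs Lam beta delta a gamma eta d1 d2 d3 d4 d5 c1 c2 c3 c4 q =
     (\<lambda>(S, E, I, R, U, C).
        let N = S + E + I + R + U + C;
            force = beta * S / N * (I + U + R)
        in ( Lam - force - delta * S,
             force - (a + d1 + c1) * E,
             a * E - (gamma + d2 + c2) * I,
             gamma * q * I - (d3 + c3) * R + eta * U,
             gamma * (1 - q) * I - (d4 + c4) * U - eta * U,
             c1 * E + c2 * I + c3 * R + c4 * U - d5 * C ))"

definition solves_on :: "('a::real_normed_vector \<Rightarrow> 'a) \<Rightarrow> (real \<Rightarrow> 'a) \<Rightarrow> real set \<Rightarrow> bool" where
  "solves_on F x J \<longleftrightarrow> (\<forall>t\<in>J. (x has_vector_derivative F (x t)) (at t within J))"

definition lyap_stable :: "('a::real_normed_vector \<Rightarrow> 'a) \<Rightarrow> 'a \<Rightarrow> bool" where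
  "lyap_stable F e \<longleftrightarrow>
     (\<forall>eps>0. \<exists>d>0. \<forall>x T. T > 0 \<and> solves_on F x {0..<T} \<and> dist (x 0) e < d \<longrightarrow>
        (\<forall>t\<in>{0..<T}. dist (x t) e < eps))"

definition loc_asym_stable :: "('a::real_normed_vector \<Rightarrow> 'a) \<Rightarrow> 'a \<Rightarrow> bool" where
  "loc_asym_stable F e \<longleftrightarrow> lyap_stable F e \<and>
     (\<exists>d>0. \<forall>x0. dist x0 e < d \<longrightarrow>
        (\<exists>x. x 0 = x0 \<and> solves_on F x {0..}) \<and>
        (\<forall>x. x 0 = x0 \<and> solves_on F x {0..} \<longrightarrow> (x \<longlongrightarrow> e) at_top))"

definition unstable :: "('a::real_normed_vector \<Rightarrow> 'a) \<Rightarrow> 'a \<Rightarrow> bool" where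
  "unstable F e \<longleftrightarrow> \<not> lyap_stable F e"

definition seiruc_R0 ::
  "real \<Rightarrow> real \<Rightarrow> real \<Rightarrow> real \<Rightarrow> real \<Rightarrow> real \<Rightarrow> real \<Rightarrow> real \<Rightarrow> real \<Rightarrow> real \<Rightarrow>
   real \<Rightarrow> real \<Rightarrow> real \<Rightarrow> real \<Rightarrow> real \<Rightarrow> real" where
  "seiruc_R0 Lam beta delta a gamma eta d1 d2 d3 d4 c1 c2 c3 c4 q =
     (let th1 = a + d1 + c1; th2 = gamma + d2 + c2; th3 = d3 + c3; th4 = d4 + c4 + eta;
          P = gamma * (1 - q) * (eta + th3) + th4 * (th3 + q * gamma);
          N = Lam / delta
      in a * beta * Lam * P / (N * delta * th1 * th2 * th3 * th4))"

end

theory Submission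
  imports Defs
begin

text \<open>
  Near the disease-free equilibrium \<open>e\<close> the susceptible fraction \<open>S/N\<close> is close to 1, so
  the field is squeezed between cooperative linear fields whose infection block decays or
  grows according to the sign of \<open>R0 - 1\<close>. This is made quantitative by positive weights.

  If \<open>R0 < 1\<close> there are weights \<open>w\<close> and a rate \<open>k > 0\<close> such that on the boundary of each
  small box \<open>|x\<^sub>i - e\<^sub>i| \<le> \<rho> w\<^sub>i\<close> the field points into the box faster than the box shrinks
  at rate \<open>k\<close>. A first-touching-time argument then keeps solutions inside boxes shrinking
  like \<open>exp (- k t)\<close>.

  If \<open>R0 > 1\<close> there are weights for which the cone \<open>E \<ge> \<rho> vE, I \<ge> \<rho>, R \<ge> \<rho> vR,
  U \<ge> \<rho> vU\<close> is pushed outward at rate \<open>k\<close>, so \<open>I\<close> grows like \<open>exp (k t)\<close> as long as the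
  solution stays near \<open>e\<close>; solutions starting arbitrarily close to \<open>e\<close> therefore leave a
  fixed neighbourhood.

  Solutions are constructed for the field composed with the retraction onto a small cube
  around \<open>e\<close>, which is globally Lipschitz and agrees with the original field near \<open>e\<close>.
\<close>

section \<open>Solutions of globally Lipschitz vector fields\<close>

lemma solves_on_subset:
  assumes "solves_on G x J" "J' \<subseteq> J" "\<And>t. t \<in> J' \<Longrightarrow> G (x t) = F (x t)"
  shows "solves_on F x J'"
  unfolding solves_on_def
proof
  fix t assume t: "t \<in> J'"
  have "(x has_vector_derivative G (x t)) (at t within J)"
    using assms(1,2) t unfolding solves_on_def by blast
  then show "(x has_vector_derivative F (x t)) (at t within J')"
    using assms(2,3) t by (auto intro: has_vector_derivative_within_subset)
qed

lemma solves_on_singleton: "solves_on G x {t..t}"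
  by (simp add: solves_on_def has_vector_derivative_def has_derivative_within_singleton_iff
      bounded_linear_scaleR_left)

lemma integral_equation_solves:
  fixes G :: "'a::banach \<Rightarrow> 'a"
  assumes G: "continuous_on UNIV G" and y: "continuous_on {a..b} y"
    and eq: "\<And>t. t \<in> {a..b} \<Longrightarrow> y t = p + integral {a..t} (\<lambda>s. G (y s))"
  shows "solves_on G y {a..b}"
  unfolding solves_on_def
proof
  fix t assume t: "t \<in> {a..b}"
  have "continuous_on {a..b} (\<lambda>s. G (y s))"
    using G y by (rule continuous_on_compose2) auto
  from integral_has_vector_derivative[OF this t]
  have "((\<lambda>u. p + integral {a..u} (\<lambda>s. G (y s))) has_vector_derivative G (y t)) (at t within {a..b})"
    by (intro derivative_eq_intros) auto
  with t eq show "(y has_vector_derivative G (y t)) (at t within {a..b})"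
    by (rule has_vector_derivative_transform)
qed

text \<open>Time is clamped to \<open>[t0, t0 + h]\<close>, so that the Picard operator acts on bounded
  continuous functions on the whole real line.\<close>

definition picard_step :: "('a::banach \<Rightarrow> 'a) \<Rightarrow> real \<Rightarrow> real \<Rightarrow> 'a \<Rightarrow> (real \<Rightarrow> 'a) \<Rightarrow> real \<Rightarrow> 'a" where
  "picard_step G t0 h p y t = p + integral {t0..max t0 (min (t0 + h) t)} (\<lambda>s. G (y s))"

lemma picard_step_bcontfun:
  assumes G: "continuous_on UNIV G" and y: "continuous_on UNIV y" and h: "0 \<le> h"
  shows "picard_step G t0 h p y \<in> bcontfun"
proof -
  define V where "V u = p + integral {t0..u} (\<lambda>s. G (y s))" for u
  have "continuous_on {t0..t0 + h} (\<lambda>u. integral {t0..u} (\<lambda>s. G (y s)))"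
    using G y by (intro indefinite_integral_continuous_1 integrable_continuous_interval
        continuous_on_compose2[OF G]) (auto intro: continuous_on_subset)
  then have V: "continuous_on {t0..t0 + h} V" unfolding V_def by (intro continuous_intros)
  have range: "max t0 (min (t0 + h) t) \<in> {t0..t0 + h}" for t using h by auto
  have "continuous_on UNIV (picard_step G t0 h p y)"
    unfolding picard_step_def V_def[symmetric]
    by (rule continuous_on_compose2[OF V]) (use range in \<open>auto intro!: continuous_intros\<close>)
  moreover have "bounded (V ` {t0..t0 + h})"
    by (intro compact_imp_bounded compact_continuous_image V) simp
  then have "bounded (range (picard_step G t0 h p y))"
    by (rule bounded_subset) (use range in \<open>auto simp: picard_step_def V_def[symmetric]\<close>)
  ultimately show ?thesis by (simp add: bcontfun_def)
qed

lemma dist_picard_step_le: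
  fixes f g :: "real \<Rightarrow>\<^sub>C 'a::banach"
  assumes lip: "L-lipschitz_on UNIV G" and h: "0 \<le> h"
  shows "dist (picard_step G t0 h p f t) (picard_step G t0 h p g t) \<le> L * h * dist f g"
proof -
  define c where "c = max t0 (min (t0 + h) t)"
  have G: "continuous_on UNIV G"
    using lipschitz_on_continuous_on[OF lip] .
  let ?F = "\<lambda>s. G (apply_bcontfun f s)" and ?G = "\<lambda>s. G (apply_bcontfun g s)"
  have int: "?F integrable_on {t0..c}" "?G integrable_on {t0..c}"
    by (auto intro!: integrable_continuous_interval continuous_on_compose2[OF G])
  have pointwise: "norm (?F s - ?G s) \<le> L * dist f g" for s
  proof -
    have "norm (?F s - ?G s) \<le> L * dist (apply_bcontfun f s) (apply_bcontfun g s)"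
      using lipschitz_onD[OF lip] by (simp add: dist_norm)
    also have "\<dots> \<le> L * dist f g"
      by (intro mult_left_mono dist_bounded lipschitz_on_nonneg[OF lip])
    finally show ?thesis .
  qed
  have "dist (picard_step G t0 h p f t) (picard_step G t0 h p g t) =
      norm (integral {t0..c} (\<lambda>s. ?F s - ?G s))"
    using integral_diff[OF int] by (simp add: picard_step_def c_def dist_norm)
  also have "\<dots> \<le> L * dist f g * Henstock_Kurzweil_Integration.content (cbox t0 c)"
    using int pointwise lipschitz_on_nonneg[OF lip]
    by (intro has_integral_bound[of _ "\<lambda>s. ?F s - ?G s"])
      (auto intro!: integrable_diff integrable_integral simp: cbox_interval)
  also have "\<dots> \<le> L * dist f g * h"
    using h lipschitz_on_nonneg[OF lip] by (intro mult_left_mono) (auto simp: c_def)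
  finally show ?thesis by (simp add: mult_ac)
qed

lemma lipschitz_local_solution:
  fixes G :: "'a::banach \<Rightarrow> 'a"
  assumes L: "0 < L" and lip: "L-lipschitz_on UNIV G"
  shows "\<exists>y. y t0 = p \<and> solves_on G y {t0..t0 + 1 / (2 * L)}"
proof -
  define h where "h = 1 / (2 * L)"
  have h: "0 < h" "L * h = 1 / 2" using L by (auto simp: h_def)
  have G: "continuous_on UNIV G" using lipschitz_on_continuous_on[OF lip] .
  define \<Phi> where "\<Phi> f = Bcontfun (picard_step G t0 h p (apply_bcontfun f))" for f :: "real \<Rightarrow>\<^sub>C 'a"
  have \<Phi>_apply: "apply_bcontfun (\<Phi> f) = picard_step G t0 h p (apply_bcontfun f)" for f
    unfolding \<Phi>_def using picard_step_bcontfun[OF G _ less_imp_le[OF h(1)]]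
    by (simp add: Bcontfun_inverse)
  have "dist (\<Phi> f) (\<Phi> g) \<le> 1 / 2 * dist f g" for f g
    using dist_picard_step_le[OF lip less_imp_le[OF h(1)]] h(2) by (intro dist_bound) (simp add: \<Phi>_apply)
  then have "\<exists>!f. \<Phi> f = f"
    by (intro banach_fix_type[of "1/2"]) simp_all
  then obtain f where "\<Phi> f = f" by blast
  then have fixed: "picard_step G t0 h p (apply_bcontfun f) = apply_bcontfun f" by (metis \<Phi>_apply)
  have "apply_bcontfun f t0 = p"
    using fun_cong[OF fixed, of t0] h by (simp add: picard_step_def)
  moreover have "solves_on G (apply_bcontfun f) {t0..t0 + h}"
  proof (rule integral_equation_solves[OF G])
    show "apply_bcontfun f t = p + integral {t0..t} (\<lambda>s. G (apply_bcontfun f s))"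
      if "t \<in> {t0..t0 + h}" for t
      using fun_cong[OF fixed, of t] that by (simp add: picard_step_def)
  qed (auto intro: continuous_on_subset)
  ultimately show ?thesis unfolding h_def by blast
qed

lemma solves_on_concat:
  assumes y: "solves_on G y {a..b}" and z: "solves_on G z {b..c}" and "y b = z b" "a \<le> b" "b \<le> c"
  shows "solves_on G (\<lambda>t. if t \<in> {a..b} then y t else z t) {a..c}"
  unfolding solves_on_def
proof
  fix t assume t: "t \<in> {a..c}"
  have "((\<lambda>t. if t \<in> {a..b} then y t else z t) has_vector_derivative
      (if t \<in> {a..b} then G (y t) else G (z t))) (at t within {a..c})"
  proof (rule has_vector_derivative_If_within_closures)
    show "t \<in> {a..b} \<union> {b..c}" "{a..c} = {a..b} \<union> {b..c}" using t assms by auto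
    show "(y has_vector_derivative G (y t)) (at t within {a..b} \<union> (closure {a..b} \<inter> closure {b..c}))"
      if "t \<in> {a..b} \<union> (closure {a..b} \<inter> closure {b..c})"
      using y that assms unfolding solves_on_def by (auto simp: insert_absorb)
    show "(z has_vector_derivative G (z t)) (at t within {b..c} \<union> (closure {a..b} \<inter> closure {b..c}))"
      if "t \<in> {b..c} \<union> (closure {a..b} \<inter> closure {b..c})"
      using z that assms unfolding solves_on_def by (auto simp: insert_absorb)
  qed (use assms in auto)
  then show "((\<lambda>t. if t \<in> {a..b} then y t else z t) has_vector_derivative
      G (if t \<in> {a..b} then y t else z t)) (at t within {a..c})"
    by (simp add: if_distrib[of G])
qed

lemma solves_on_halfline_of_prefixes:
  assumes h: "0 < h" and solves: "\<And>n. solves_on G (y n) {0..real n * h}"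
    and consistent: "\<And>m n t. m \<le> n \<Longrightarrow> t \<in> {0..real m * h} \<Longrightarrow> y n t = y m t"
  shows "\<exists>x. x 0 = y 0 0 \<and> solves_on G x {0..}"
proof -
  define M where "M t = (SOME n. t < real n * h)" for t
  have M: "t < real (M t) * h" for t
    unfolding M_def using reals_Archimedean3[OF h] by (metis someI_ex)
  define x where "x t = y (M t) t" for t
  have x_eq: "x t = y n t" if "t \<in> {0..real n * h}" for t n
  proof -
    have "t \<in> {0..real (min n (M t)) * h}" using that M[of t] by (auto simp: min_def)
    then show ?thesis unfolding x_def by (metis consistent min.cobounded1 min.cobounded2)
  qed
  have "solves_on G x {0..}"
    unfolding solves_on_def
  proof
    fix t :: real assume t: "t \<in> {0..}"
    let ?J = "{0..real (M t) * h}"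
    have tJ: "t \<in> ?J" using M[of t] t by auto
    have "(x has_vector_derivative G (x t)) (at t within ?J)"
    proof (rule has_vector_derivative_transform[OF tJ])
      show "x s = y (M t) s" if "s \<in> ?J" for s using x_eq[OF that] .
      show "(y (M t) has_vector_derivative G (x t)) (at t within ?J)"
        using solves[of "M t"] tJ x_eq[OF tJ] unfolding solves_on_def by simp
    qed
    moreover have "at t within ?J = at t within {0..}"
      using M[of t] t by (intro at_within_nhd[of _ "{..<real (M t) * h}"]) auto
    ultimately show "(x has_vector_derivative G (x t)) (at t within {0..})" by simp
  qed
  moreover have "x 0 = y 0 0" using x_eq[of 0 0] by simp
  ultimately show ?thesis by blast
qed

lemma lipschitz_global_solution:
  fixes G :: "'a::banach \<Rightarrow> 'a"
  assumes L: "0 < L" and lip: "L-lipschitz_on UNIV G"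
  shows "\<exists>x. x 0 = p \<and> solves_on G x {0..}"
proof -
  define h where "h = 1 / (2 * L)"
  have h: "0 < h" using L by (simp add: h_def)
  obtain Y where Y: "\<And>t0 q. Y t0 q t0 = q \<and> solves_on G (Y t0 q) {t0..t0 + h}"
    using lipschitz_local_solution[OF L lip] unfolding h_def by metis
  define g where "g = rec_nat (\<lambda>t. p)
    (\<lambda>n gn t. if t \<in> {0..real n * h} then gn t else Y (real n * h) (gn (real n * h)) t)"
  have g_simps: "g 0 = (\<lambda>t. p)"
    "g (Suc n) = (\<lambda>t. if t \<in> {0..real n * h} then g n t else Y (real n * h) (g n (real n * h)) t)" for n
    unfolding g_def by (simp_all del: atLeastAtMost_iff)
  have g_solves: "solves_on G (g n) {0..real n * h}" for n
  proof (induction n)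
    case 0
    show ?case using solves_on_singleton[of G "g 0" 0] by simp
  next
    case (Suc n)
    have "solves_on G (g (Suc n)) {0..real n * h + h}"
      unfolding g_simps using h Y by (intro solves_on_concat[OF Suc.IH]) auto
    then show ?case by (simp add: algebra_simps)
  qed
  have g_consistent: "g n t = g m t" if "m \<le> n" "t \<in> {0..real m * h}" for m n t
    using that(1)
  proof (induction n)
    case (Suc n)
    show ?case
    proof (cases "m = Suc n")
      case False
      then have "m \<le> n" using Suc.prems by simp
      moreover have "t \<in> {0..real n * h}"
        using that(2) \<open>m \<le> n\<close> h by (auto intro: order_trans mult_right_mono)
      ultimately show ?thesis using Suc.IH by (simp add: g_simps)
    qed simp
  qed simp
  show ?thesis
    using solves_on_halfline_of_prefixes[OF h g_solves g_consistent] by (simp add: g_simps)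
qed

section \<open>Barriers and stability criteria\<close>

lemma real_induction:
  fixes P :: "real \<Rightarrow> bool"
  assumes reach: "\<And>t. 0 \<le> t \<Longrightarrow> t < T \<Longrightarrow> \<forall>s\<in>{0..<t}. P s \<Longrightarrow> P t"
    and extend: "\<And>t. 0 \<le> t \<Longrightarrow> t < T \<Longrightarrow> \<forall>s\<in>{0..t}. P s \<Longrightarrow>
          \<exists>d>0. \<forall>s. t \<le> s \<and> s < t + d \<and> s < T \<longrightarrow> P s"
    and t: "0 \<le> t" "t < T"
  shows "P t"
proof (rule ccontr)
  assume "\<not> P t"
  define A where "A = {s. 0 \<le> s \<and> s < T \<and> \<not> P s}"
  have tA: "t \<in> A" using t \<open>\<not> P t\<close> by (simp add: A_def)
  have bdd: "bdd_below A" unfolding A_def by (rule bdd_belowI[of _ 0]) auto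
  define u where "u = Inf A"
  have u_le: "u \<le> a" if "a \<in> A" for a using cInf_lower[OF that bdd] by (simp add: u_def)
  have u0: "0 \<le> u" unfolding u_def using tA by (intro cInf_greatest) (auto simp: A_def)
  have uT: "u < T" using u_le[OF tA] t by simp
  have below: "P s" if "0 \<le> s" "s < u" for s
    using that u_le uT by (force simp: A_def)
  then have "\<forall>s\<in>{0..u}. P s" using reach[OF u0 uT] by (auto simp: le_less)
  then obtain d where d: "d > 0" "\<forall>s. u \<le> s \<and> s < u + d \<and> s < T \<longrightarrow> P s"
    using extend[OF u0 uT] by blast
  have "u + d \<le> a" if "a \<in> A" for a
    using that d u_le[OF that] by (force simp: A_def)
  then have "u + d \<le> u" unfolding u_def using tA by (intro cInf_greatest) auto
  then show False using d by simp
qed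

lemma finite_family_stays_negative:
  fixes h :: "'i \<Rightarrow> real \<Rightarrow> real"
  assumes fin: "finite K"
    and cont: "\<And>k t. k \<in> K \<Longrightarrow> 0 \<le> t \<Longrightarrow> t < T \<Longrightarrow> continuous (at t within {0..<T}) (h k)"
    and init: "\<And>k. k \<in> K \<Longrightarrow> h k 0 < 0"
    and no_touch: "\<And>k s. k \<in> K \<Longrightarrow> 0 < s \<Longrightarrow> s < T \<Longrightarrow> \<forall>j\<in>K. \<forall>u\<in>{0..<s}. h j u < 0 \<Longrightarrow>
          \<forall>j\<in>K. h j s \<le> 0 \<Longrightarrow> h k s = 0 \<Longrightarrow> False"
    and t: "0 \<le> t" "t < T"
  shows "\<forall>k\<in>K. h k t < 0"
proof (rule real_induction[of T "\<lambda>t. \<forall>k\<in>K. h k t < 0", OF _ _ t])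
  fix t assume t0: "0 \<le> t" and tT: "t < T" and before: "\<forall>s\<in>{0..<t}. \<forall>k\<in>K. h k s < 0"
  show "\<forall>k\<in>K. h k t < 0"
  proof (cases "t = 0")
    case True
    then show ?thesis using init by simp
  next
    case False
    then have "0 < t" using t0 by simp
    have le: "h j t \<le> 0" if j: "j \<in> K" for j
    proof (rule ccontr)
      assume "\<not> h j t \<le> 0"
      then have "eventually (\<lambda>s. 0 < h j s) (at t within {0..<T})"
        using cont[OF j t0 tT] unfolding continuous_within by (intro order_tendstoD(1)) auto
      then obtain d where d: "d > 0" "\<forall>s\<in>{0..<T}. s \<noteq> t \<and> dist s t < d \<longrightarrow> 0 < h j s"
        unfolding eventually_at by blast
      define s where "s = t - min d t / 2"
      have "s \<in> {0..<t}" "dist s t < d" using d \<open>0 < t\<close> by (auto simp: s_def dist_real_def)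
      then show False using d before j tT by force
    qed
    then show ?thesis
      using no_touch[OF _ \<open>0 < t\<close> tT] before by (force simp: order.order_iff_strict)
  qed
next
  fix t assume t0: "0 \<le> t" and tT: "t < T" and upto: "\<forall>s\<in>{0..t}. \<forall>k\<in>K. h k s < 0"
  have "eventually (\<lambda>s. \<forall>k\<in>K. h k s < 0) (at t within {0..<T})"
    using cont[OF _ t0 tT] upto t0 unfolding continuous_within
    by (intro eventually_ball_finite[OF fin] ballI order_tendstoD(2)) auto
  then obtain d where d: "d > 0" "\<forall>s\<in>{0..<T}. s \<noteq> t \<and> dist s t < d \<longrightarrow> (\<forall>k\<in>K. h k s < 0)"
    unfolding eventually_at by blast
  then show "\<exists>d>0. \<forall>s. t \<le> s \<and> s < t + d \<and> s < T \<longrightarrow> (\<forall>k\<in>K. h k s < 0)"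
    using upto t0 by (intro exI[of _ d]) (force simp: dist_real_def)
qed

lemma solves_on_above_barriers:
  fixes x :: "real \<Rightarrow> 'a::real_normed_vector" and l :: "'i \<Rightarrow> 'a \<Rightarrow> real"
    and b b' :: "'i \<Rightarrow> real \<Rightarrow> real"
  assumes fin: "finite K" and sol: "solves_on H x {0..<T}"
    and lin: "\<And>k. k \<in> K \<Longrightarrow> bounded_linear (l k)"
    and b: "\<And>k s. k \<in> K \<Longrightarrow> (b k has_real_derivative b' k s) (at s)"
    and init: "\<And>k. k \<in> K \<Longrightarrow> b k 0 < l k (x 0)"
    and push: "\<And>k s. k \<in> K \<Longrightarrow> 0 < s \<Longrightarrow> s < T \<Longrightarrow> \<forall>j\<in>K. b j s \<le> l j (x s) \<Longrightarrow>
          l k (x s) = b k s \<Longrightarrow> b' k s < l k (H (x s))"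
    and t: "0 \<le> t" "t < T"
  shows "\<forall>k\<in>K. b k t < l k (x t)"
proof -
  define h where "h k s = b k s - l k (x s)" for k s
  have h_deriv: "(h k has_real_derivative b' k s - l k (H (x s))) (at s within {0..<T})"
    if "k \<in> K" "s \<in> {0..<T}" for k s
  proof -
    have "((\<lambda>s. l k (x s)) has_vector_derivative l k (H (x s))) (at s within {0..<T})"
      using sol that by (intro bounded_linear.has_vector_derivative[OF lin]) (auto simp: solves_on_def)
    moreover have "(b k has_real_derivative b' k s) (at s within {0..<T})"
      using b[OF that(1)] by (rule has_field_derivative_at_within)
    ultimately show ?thesis
      unfolding h_def by (intro DERIV_diff) (simp_all add: has_real_derivative_iff_has_vector_derivative)
  qed
  have "\<forall>k\<in>K. h k t < 0"
  proof (rule finite_family_stays_negative[OF fin _ _ _ t])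
    show "continuous (at s within {0..<T}) (h k)" if "k \<in> K" "0 \<le> s" "s < T" for k s
      using h_deriv[OF that(1)] that by (auto intro: DERIV_continuous)
    show "h k 0 < 0" if "k \<in> K" for k using init[OF that] by (simp add: h_def)
  next
    fix k s assume k: "k \<in> K" and s: "0 < s" "s < T"
      and before: "\<forall>j\<in>K. \<forall>u\<in>{0..<s}. h j u < 0" and now: "\<forall>j\<in>K. h j s \<le> 0" and touch: "h k s = 0"
    have "at s within {0..<T} = at s" using s by (intro at_within_interior) auto
    then have "(h k has_real_derivative b' k s - l k (H (x s))) (at s)"
      using h_deriv[OF k, of s] s by simp
    moreover have "b' k s - l k (H (x s)) < 0"
      using push[OF k s] now touch by (simp add: h_def)
    ultimately obtain d where d: "d > 0" "\<forall>\<eta>>0. \<eta> < d \<longrightarrow> h k s < h k (s - \<eta>)"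
      using DERIV_neg_dec_left by blast
    define \<eta> where "\<eta> = min d s / 2"
    have "0 < \<eta>" "\<eta> < d" "s - \<eta> \<in> {0..<s}" using d(1) s by (auto simp: \<eta>_def)
    then show False using d(2) before k touch by fastforce
  qed
  then show ?thesis by (simp add: h_def)
qed

lemma solves_on_inside_barriers:
  fixes x :: "real \<Rightarrow> 'a::real_normed_vector" and l :: "'i \<Rightarrow> 'a \<Rightarrow> real"
    and c :: "'i \<Rightarrow> real" and w w' :: "'i \<Rightarrow> real \<Rightarrow> real"
  assumes fin: "finite K" and sol: "solves_on H x {0..<T}"
    and lin: "\<And>i. i \<in> K \<Longrightarrow> bounded_linear (l i)"
    and w: "\<And>i s. i \<in> K \<Longrightarrow> (w i has_real_derivative w' i s) (at s)"
    and init: "\<And>i. i \<in> K \<Longrightarrow> \<bar>l i (x 0) - c i\<bar> < w i 0"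
    and push: "\<And>i s \<sigma>. i \<in> K \<Longrightarrow> 0 < s \<Longrightarrow> s < T \<Longrightarrow> \<forall>j\<in>K. \<bar>l j (x s) - c j\<bar> \<le> w j s \<Longrightarrow>
          \<sigma> = 1 \<or> \<sigma> = -1 \<Longrightarrow> l i (x s) - c i = \<sigma> * w i s \<Longrightarrow> \<sigma> * l i (H (x s)) < w' i s"
    and t: "0 \<le> t" "t < T"
  shows "\<forall>i\<in>K. \<bar>l i (x t) - c i\<bar> < w i t"
proof -
  define L where "L = K \<times> {-1, 1::real}"
  have inside_iff: "(\<forall>i\<in>K. \<bar>l i (x s) - c i\<bar> \<le> w i s) \<longleftrightarrow>
      (\<forall>p\<in>L. - snd p * c (fst p) - w (fst p) s \<le> - snd p * l (fst p) (x s))" for s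
    by (force simp: L_def abs_le_iff)
  have "\<forall>p\<in>L. - snd p * c (fst p) - w (fst p) t < - snd p * l (fst p) (x t)"
  proof (rule solves_on_above_barriers[OF _ sol _ _ _ _ t])
    show "finite L" using fin by (simp add: L_def)
    show "bounded_linear (\<lambda>y. - snd p * l (fst p) y)" if "p \<in> L" for p
      using that lin by (intro bounded_linear_compose[OF bounded_linear_mult_right]) (auto simp: L_def)
    show "((\<lambda>s. - snd p * c (fst p) - w (fst p) s) has_real_derivative - w' (fst p) s) (at s)"
      if "p \<in> L" for p s
      using that w by (auto intro!: derivative_eq_intros simp: L_def)
    show "- snd p * c (fst p) - w (fst p) 0 < - snd p * l (fst p) (x 0)" if "p \<in> L" for p
      using that init[of "fst p"] by (auto simp: L_def abs_less_iff)
  next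
    fix p s assume "p \<in> L" "0 < s" "s < T"
      and "\<forall>q\<in>L. - snd q * c (fst q) - w (fst q) s \<le> - snd q * l (fst q) (x s)"
      and "- snd p * l (fst p) (x s) = - snd p * c (fst p) - w (fst p) s"
    then show "- w' (fst p) s < - snd p * l (fst p) (H (x s))"
      using push[of "fst p" s "snd p"] inside_iff[of s] by (auto simp: L_def algebra_simps)
  qed
  then show ?thesis by (force simp: L_def abs_less_iff)
qed

lemma stable_confines_modified_solution:
  fixes F G :: "'a::real_normed_vector \<Rightarrow> 'a"
  assumes stable: "\<And>x T. T > 0 \<Longrightarrow> solves_on F x {0..<T} \<Longrightarrow> dist (x 0) e < d \<Longrightarrow>
          \<forall>t\<in>{0..<T}. dist (x t) e < \<epsilon>"
    and agree: "\<And>y. dist y e \<le> \<rho> \<Longrightarrow> G y = F y" and "\<epsilon> < \<rho>"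
    and sol: "solves_on G x {0..}" and x0: "dist (x 0) e < d" "dist (x 0) e < \<epsilon>"
    and t: "0 \<le> t"
  shows "dist (x t) e < \<epsilon>"
proof -
  have cont: "continuous (at s within {0..}) (\<lambda>s. dist (x s) e)" if "0 \<le> s" for s
    using sol that unfolding solves_on_def
    by (intro continuous_dist continuous_const has_vector_derivative_continuous) auto
  have "\<forall>k\<in>{()}. dist (x t) e - \<epsilon> < 0"
  proof (rule finite_family_stays_negative[where h = "\<lambda>_ s. dist (x s) e - \<epsilon>" and T = "t + 1"])
    show "continuous (at s within {0..<t + 1}) (\<lambda>s. dist (x s) e - \<epsilon>)" if "0 \<le> s" for s
      using continuous_within_subset[OF cont[OF that], of "{0..<t + 1}"]
      by (intro continuous_diff continuous_const) (auto simp: subset_iff)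
  next
    fix s assume s: "0 < s" and before: "\<forall>j\<in>{()}. \<forall>u\<in>{0..<s}. dist (x u) e - \<epsilon> < 0"
      and touch: "dist (x s) e - \<epsilon> = 0"
    \<comment> \<open>Slightly beyond the first time at distance \<open>\<epsilon>\<close> the solution still sees \<open>G = F\<close>,
      so stability of \<open>F\<close> applies up to that time.\<close>
    have "eventually (\<lambda>u. dist (x u) e < \<rho>) (at s within {0..})"
      using cont[of s] s touch \<open>\<epsilon> < \<rho>\<close> unfolding continuous_within
      by (intro order_tendstoD(2)) auto
    then obtain \<delta> where \<delta>: "\<delta> > 0" "\<forall>u\<in>{0..}. u \<noteq> s \<and> dist u s < \<delta> \<longrightarrow> dist (x u) e < \<rho>"
      unfolding eventually_at by blast
    have near: "dist (x u) e < \<rho>" if "u \<in> {0..<s + \<delta>}" for u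
    proof (cases "u < s")
      case True
      then have "dist (x u) e < \<epsilon>" using before that by simp
      then show ?thesis using \<open>\<epsilon> < \<rho>\<close> by simp
    next
      case False
      then show ?thesis using \<delta> that touch \<open>\<epsilon> < \<rho>\<close> by (cases "u = s") (auto simp: dist_real_def)
    qed
    have "solves_on F x {0..<s + \<delta>}"
    proof (rule solves_on_subset[OF sol])
      show "G (x u) = F (x u)" if "u \<in> {0..<s + \<delta>}" for u
        using near[OF that] by (intro agree) simp
    qed auto
    then have "dist (x s) e < \<epsilon>" using stable[of "s + \<delta>" x] x0 s \<delta> by auto
    then show False using touch by simp
  qed (use x0 t in auto)
  then show ?thesis by simp
qed

lemma unstable_if_escapes:
  fixes F G :: "'a::banach \<Rightarrow> 'a"
  assumes lip: "0 < L" "L-lipschitz_on UNIV G"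
    and agree: "\<And>y. dist y e \<le> \<rho> \<Longrightarrow> G y = F y" and \<epsilon>: "0 < \<epsilon>" "\<epsilon> < \<rho>"
    and escape: "\<And>d. 0 < d \<Longrightarrow> \<exists>x0. dist x0 e < d \<and>
          (\<forall>x. x 0 = x0 \<longrightarrow> solves_on G x {0..} \<longrightarrow> (\<exists>t\<ge>0. \<epsilon> \<le> dist (x t) e))"
  shows "unstable F e"
  unfolding unstable_def
proof
  assume "lyap_stable F e"
  then obtain d where d: "d > 0" and stable: "\<And>x T. T > 0 \<Longrightarrow> solves_on F x {0..<T} \<Longrightarrow>
      dist (x 0) e < d \<Longrightarrow> \<forall>t\<in>{0..<T}. dist (x t) e < \<epsilon>"
    using \<epsilon> unfolding lyap_stable_def by meson
  obtain x0 where x0: "dist x0 e < min d \<epsilon>"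
    and escapes: "\<And>x. x 0 = x0 \<Longrightarrow> solves_on G x {0..} \<Longrightarrow> \<exists>t\<ge>0. \<epsilon> \<le> dist (x t) e"
    using escape[of "min d \<epsilon>"] d \<epsilon> by auto
  obtain x where x: "x 0 = x0" "solves_on G x {0..}"
    using lipschitz_global_solution[OF lip] by blast
  have "dist (x t) e < \<epsilon>" if "0 \<le> t" for t
    using stable_confines_modified_solution[OF stable agree \<epsilon>(2) x(2) _ _ that] x0 x(1) by auto
  then show False using escapes[OF x] by force
qed

lemma lyap_stable_if_exponential_bound:
  assumes pos: "0 < \<rho>" "0 < C"
    and bound: "\<And>x T r t. 0 < r \<Longrightarrow> C * r \<le> \<rho> \<Longrightarrow> solves_on F x {0..<T} \<Longrightarrow>
          dist (x 0) e < r \<Longrightarrow> 0 \<le> t \<Longrightarrow> t < T \<Longrightarrow> dist (x t) e \<le> C * r * exp (- k * t)"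
    and k: "0 \<le> k"
  shows "lyap_stable F e"
  unfolding lyap_stable_def
proof (intro allI impI)
  fix \<epsilon> :: real assume "\<epsilon> > 0"
  define r where "r = min \<rho> \<epsilon> / (2 * C)"
  have r: "0 < r" "C * r \<le> \<rho>" "C * r < \<epsilon>" using pos \<open>\<epsilon> > 0\<close> by (auto simp: r_def)
  have "dist (x t) e < \<epsilon>" if "solves_on F x {0..<T}" "dist (x 0) e < r" "t \<in> {0..<T}" for x T t
  proof -
    have "dist (x t) e \<le> C * r * exp (- k * t)" using bound[OF r(1,2) that(1,2)] that(3) by auto
    also have "\<dots> \<le> C * r" using pos r k that(3) by simp
    finally show ?thesis using r by simp
  qed
  then show "\<exists>d>0. \<forall>x T. T > 0 \<and> solves_on F x {0..<T} \<and> dist (x 0) e < d \<longrightarrow>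
      (\<forall>t\<in>{0..<T}. dist (x t) e < \<epsilon>)"
    using r(1) by blast
qed

lemma solves_on_halfline_if_exponential_bound:
  fixes F G :: "'a::banach \<Rightarrow> 'a"
  assumes lip: "0 < L" "L-lipschitz_on UNIV G"
    and agree: "\<And>y. dist y e \<le> \<rho> \<Longrightarrow> G y = F y" and pos: "0 < \<rho>" "0 \<le> k"
    and bound: "\<And>x T t. solves_on G x {0..<T} \<Longrightarrow> dist (x 0) e < \<rho> / C \<Longrightarrow> 0 \<le> t \<Longrightarrow> t < T \<Longrightarrow>
          dist (x t) e \<le> \<rho> * exp (- k * t)"
    and x0: "dist x0 e < \<rho> / C"
  shows "\<exists>x. x 0 = x0 \<and> solves_on F x {0..}"
proof -
  obtain x where x: "x 0 = x0" "solves_on G x {0..}"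
    using lipschitz_global_solution[OF lip] by blast
  have "dist (x t) e \<le> \<rho>" if "0 \<le> t" for t
  proof -
    have "solves_on G x {0..<t + 1}" using x(2) by (rule solves_on_subset) auto
    then have "dist (x t) e \<le> \<rho> * exp (- k * t)" using bound x0 x(1) that by simp
    also have "\<dots> \<le> \<rho>" using pos that by simp
    finally show ?thesis .
  qed
  then have "solves_on F x {0..}" by (intro solves_on_subset[OF x(2)] agree) auto
  then show ?thesis using x(1) by blast
qed

lemma tendsto_if_dist_le_exp:
  assumes pos: "0 < k"
    and bound: "\<And>t. 0 \<le> t \<Longrightarrow> dist (x t) e \<le> \<rho> * exp (- k * t)"
  shows "(x \<longlongrightarrow> e) at_top"
proof -
  have "filterlim (\<lambda>t. - k * t) at_bot at_top"
    using pos by (intro filterlim_tendsto_neg_mult_at_bot[OF tendsto_const _ filterlim_ident]) simp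
  then have decay: "((\<lambda>t. \<rho> * exp (- k * t)) \<longlongrightarrow> 0) at_top"
    using tendsto_mult_right_zero filterlim_compose[OF exp_at_bot] by blast
  have bounded: "eventually (\<lambda>t. dist (x t) e \<le> \<rho> * exp (- k * t)) at_top"
    using eventually_ge_at_top[of 0] by eventually_elim (rule bound)
  have "((\<lambda>t. dist (x t) e) \<longlongrightarrow> 0) at_top"
    by (rule tendsto_sandwich[OF _ bounded tendsto_const decay]) simp
  then show ?thesis by (rule tendsto_dist_iff[THEN iffD2])
qed

lemma loc_asym_stable_if_exponential_bound:
  fixes F G :: "'a::banach \<Rightarrow> 'a"
  assumes lip: "0 < L" "L-lipschitz_on UNIV G"
    and agree: "\<And>y. dist y e \<le> \<rho> \<Longrightarrow> G y = F y" and pos: "0 < \<rho>" "0 < k" "0 < C"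
    and bound: "\<And>H x T r t. (\<And>y. dist y e \<le> \<rho> \<Longrightarrow> H y = F y) \<Longrightarrow> 0 < r \<Longrightarrow> C * r \<le> \<rho> \<Longrightarrow>
          solves_on H x {0..<T} \<Longrightarrow> dist (x 0) e < r \<Longrightarrow> 0 \<le> t \<Longrightarrow> t < T \<Longrightarrow>
          dist (x t) e \<le> C * r * exp (- k * t)"
  shows "loc_asym_stable F e"
proof -
  have r: "0 < \<rho> / C" "C * (\<rho> / C) \<le> \<rho>" using pos by auto
  have bound_G: "dist (x t) e \<le> \<rho> * exp (- k * t)"
    if "solves_on G x {0..<T}" "dist (x 0) e < \<rho> / C" "0 \<le> t" "t < T" for x T t
    using bound[OF agree r that] pos by simp
  have bound_F: "dist (x t) e \<le> \<rho> * exp (- k * t)"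
    if "solves_on F x {0..}" "dist (x 0) e < \<rho> / C" "0 \<le> t" for x t
  proof -
    have "solves_on F x {0..<t + 1}" using that(1) by (rule solves_on_subset) auto
    then show ?thesis using bound[OF _ r, of F x "t + 1" t] that pos by simp
  qed
  have "lyap_stable F e"
  proof (rule lyap_stable_if_exponential_bound[OF pos(1,3) _ less_imp_le[OF pos(2)]])
    show "dist (x t) e \<le> C * r * exp (- k * t)"
      if "0 < r" "C * r \<le> \<rho>" "solves_on F x {0..<T}" "dist (x 0) e < r" "0 \<le> t" "t < T" for x T r t
      by (rule bound[OF _ that]) simp
  qed
  moreover have "\<exists>x. x 0 = x0 \<and> solves_on F x {0..}" if "dist x0 e < \<rho> / C" for x0
  proof (rule solves_on_halfline_if_exponential_bound[OF lip agree pos(1) less_imp_le[OF pos(2)] _ that])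
    show "dist (x t) e \<le> \<rho> * exp (- k * t)"
      if "solves_on G x {0..<T}" "dist (x 0) e < \<rho> / C" "0 \<le> t" "t < T" for x T t
      using bound_G[OF that] .
  qed
  moreover have "(x \<longlongrightarrow> e) at_top" if "solves_on F x {0..}" "dist (x 0) e < \<rho> / C" for x
    using tendsto_if_dist_le_exp[OF pos(2) bound_F[OF that]] .
  ultimately show ?thesis unfolding loc_asym_stable_def using r(1) by blast
qed

section \<open>The SEIRUC vector field near the disease-free equilibrium\<close>

definition coord :: "nat \<Rightarrow> state \<Rightarrow> real" where
  "coord i = (\<lambda>(S, E, I, R, U, C). [S, E, I, R, U, C] ! i)"

lemma coord_Pair [simp]: "coord i (S, E, I, R, U, C) = [S, E, I, R, U, C] ! i"
  by (simp add: coord_def)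

lemma less_6_cases: "(i::nat) < 6 \<longleftrightarrow> i = 0 \<or> i = 1 \<or> i = 2 \<or> i = 3 \<or> i = 4 \<or> i = 5"
  by arith

lemma all_less_6: "(\<forall>i<6. P i) \<longleftrightarrow> P 0 \<and> P 1 \<and> P 2 \<and> P 3 \<and> P 4 \<and> P (5::nat)"
  unfolding less_6_cases by (simp add: imp_disjL all_conj_distrib)

lemma bounded_linear_coord: "i < 6 \<Longrightarrow> bounded_linear (coord i)"
proof -
  have "bounded_linear (\<lambda>y::state. fst y)" "bounded_linear (\<lambda>y::state. fst (snd y))"
    "bounded_linear (\<lambda>y::state. fst (snd (snd y)))" "bounded_linear (\<lambda>y::state. fst (snd (snd (snd y))))"
    "bounded_linear (\<lambda>y::state. fst (snd (snd (snd (snd y)))))"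
    "bounded_linear (\<lambda>y::state. snd (snd (snd (snd (snd y)))))"
    by (intro bounded_linear_compose[OF bounded_linear_fst] bounded_linear_compose[OF bounded_linear_snd]
        bounded_linear_fst bounded_linear_snd)+
  moreover have "coord 0 = (\<lambda>y. fst y)" "coord 1 = (\<lambda>y. fst (snd y))" "coord 2 = (\<lambda>y. fst (snd (snd y)))"
    "coord 3 = (\<lambda>y. fst (snd (snd (snd y))))" "coord 4 = (\<lambda>y. fst (snd (snd (snd (snd y)))))"
    "coord 5 = (\<lambda>y. snd (snd (snd (snd (snd y)))))"
    by (auto simp: fun_eq_iff split: prod.splits)
  ultimately show "i < 6 \<Longrightarrow> bounded_linear (coord i)"
    unfolding less_6_cases by (elim disjE) simp_all
qed

lemma coord_minus: "i < 6 \<Longrightarrow> coord i (y - z) = coord i y - coord i z"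
  by (rule linear_diff[OF bounded_linear.linear[OF bounded_linear_coord]])

lemma dist_le_sum_coords: "dist y z \<le> (\<Sum>i<6. \<bar>coord i y - coord i z\<bar>)"
proof -
  have pair: "dist (u, v) (u', v') \<le> dist u u' + dist v v'"
    for u u' :: real and v v' :: "'b::metric_space"
    using sqrt_sum_squares_le_sum_abs[of "dist u u'" "dist v v'"] by (simp add: dist_Pair_Pair)
  obtain S E I R U C where y: "y = (S, E, I, R, U, C)" by (cases y rule: prod_cases6)
  obtain S' E' I' R' U' C' where z: "z = (S', E', I', R', U', C')" by (cases z rule: prod_cases6)
  have "dist y z \<le> dist S S' + (dist E E' + (dist I I' + (dist R R' + dist (U, C) (U', C'))))"
    unfolding y z by (meson pair add_left_mono order_trans)
  also have "dist (U, C) (U', C') \<le> dist U U' + dist C C'" by (rule pair)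
  finally show ?thesis by (simp add: y z dist_real_def numeral_eq_Suc)
qed

lemma abs_coord_le_norm: "i < 6 \<Longrightarrow> \<bar>coord i w\<bar> \<le> norm w"
proof -
  have fst: "\<bar>u\<bar> \<le> norm (u, v)" and snd: "norm v \<le> norm (u, v)"
    for u :: real and v :: "'b::real_normed_vector"
    using norm_fst_le[of u v] norm_snd_le[of v u] by simp_all
  obtain S E I R U C where w: "w = (S, E, I, R, U, C)" by (cases w rule: prod_cases6)
  have "norm (U, C) \<le> norm (R, U, C)" "norm (R, U, C) \<le> norm (I, R, U, C)"
    "norm (I, R, U, C) \<le> norm (E, I, R, U, C)" "norm (E, I, R, U, C) \<le> norm w"
    unfolding w by (rule snd)+
  moreover have "\<bar>C\<bar> \<le> norm (U, C)" using snd[of C U] by simp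
  moreover have "\<bar>S\<bar> \<le> norm w" "\<bar>E\<bar> \<le> norm (E, I, R, U, C)" "\<bar>I\<bar> \<le> norm (I, R, U, C)"
    "\<bar>R\<bar> \<le> norm (R, U, C)" "\<bar>U\<bar> \<le> norm (U, C)"
    unfolding w by (rule fst)+
  ultimately show "i < 6 \<Longrightarrow> \<bar>coord i w\<bar> \<le> norm w"
    unfolding less_6_cases by (elim disjE) (simp_all add: w)
qed

lemma abs_coord_diff_le_dist: "i < 6 \<Longrightarrow> \<bar>coord i y - coord i z\<bar> \<le> dist y z"
  using abs_coord_le_norm[of i "y - z"] by (simp add: coord_minus dist_norm)

lemma abs_ratio_product_diff_le:
  fixes S1 S2 N1 N2 A1 A2 B m :: real
  assumes "0 < m" "m \<le> N1" "m \<le> N2" "\<bar>S2\<bar> \<le> B" "\<bar>N1\<bar> \<le> B" "\<bar>N2\<bar> \<le> B" "\<bar>A1\<bar> \<le> B"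
  shows "\<bar>S1 / N1 * A1 - S2 / N2 * A2\<bar> \<le> B * B / (m * m) * (\<bar>S1 - S2\<bar> + \<bar>N1 - N2\<bar> + \<bar>A1 - A2\<bar>)"
proof -
  have N: "0 < N1" "0 < N2" "0 \<le> B" using assms by linarith+
  define num where "num = (S1 - S2) * N2 * A1 + S2 * (N2 - N1) * A1 + S2 * N1 * (A1 - A2)"
  have eq: "S1 / N1 * A1 - S2 / N2 * A2 = num / (N1 * N2)"
    using N unfolding num_def by (simp add: field_simps)
  have "\<bar>(S1 - S2) * N2 * A1\<bar> \<le> \<bar>S1 - S2\<bar> * (B * B)"
    "\<bar>S2 * (N2 - N1) * A1\<bar> \<le> \<bar>N1 - N2\<bar> * (B * B)"
    "\<bar>S2 * N1 * (A1 - A2)\<bar> \<le> \<bar>A1 - A2\<bar> * (B * B)"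
    unfolding abs_mult using assms N
    by (simp_all add: abs_minus_commute mult_left_mono mult_mono mult_ac)
  then have "\<bar>num\<bar> \<le> B * B * (\<bar>S1 - S2\<bar> + \<bar>N1 - N2\<bar> + \<bar>A1 - A2\<bar>)"
    unfolding num_def by (smt (verit) abs_triangle_ineq distrib_left mult.commute)
  moreover have "m * m \<le> N1 * N2" using assms by (intro mult_mono) auto
  ultimately have "\<bar>num\<bar> / (N1 * N2) \<le> B * B * (\<bar>S1 - S2\<bar> + \<bar>N1 - N2\<bar> + \<bar>A1 - A2\<bar>) / (m * m)"
    using N assms(1) by (intro frac_le) auto
  then show ?thesis using eq N by (simp add: abs_divide abs_mult)
qed

locale seiruc =
  fixes Lam beta delta a gamma eta d1 d2 d3 d4 d5 c1 c2 c3 c4 q :: real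
  assumes pos: "Lam > 0" "beta > 0" "delta > 0" "a > 0" "gamma > 0" "eta > 0"
    "d1 > 0" "d2 > 0" "d3 > 0" "d4 > 0" "d5 > 0"
    "c1 > 0" "c2 > 0" "c3 > 0" "c4 > 0" "0 \<le> q" "q \<le> 1"
begin

abbreviation "F \<equiv> seiruc_rhs Lam beta delta a gamma eta d1 d2 d3 d4 d5 c1 c2 c3 c4 q"
abbreviation "R0 \<equiv> seiruc_R0 Lam beta delta a gamma eta d1 d2 d3 d4 c1 c2 c3 c4 q"
definition S0 :: real where "S0 = Lam / delta"
abbreviation dfe :: state where "dfe \<equiv> (S0, 0, 0, 0, 0, 0)"
abbreviation "th1 \<equiv> a + d1 + c1"
abbreviation "th2 \<equiv> gamma + d2 + c2"
abbreviation "th3 \<equiv> d3 + c3"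
abbreviation "th4 \<equiv> d4 + c4 + eta"

lemma S0_pos: "0 < S0"
  using pos by (simp add: S0_def)

lemma delta_S0: "delta * S0 = Lam"
  using pos by (simp add: S0_def)

definition total :: "state \<Rightarrow> real" where
  "total y = (\<Sum>i<6. coord i y)"

definition force :: "state \<Rightarrow> real" where
  "force y = beta * (coord 0 y / total y) * (coord 2 y + coord 3 y + coord 4 y)"

lemma coord_F:
  "coord 0 (F y) = Lam - force y - delta * coord 0 y"
  "coord 1 (F y) = force y - th1 * coord 1 y"
  "coord 2 (F y) = a * coord 1 y - th2 * coord 2 y"
  "coord 3 (F y) = gamma * q * coord 2 y - th3 * coord 3 y + eta * coord 4 y"
  "coord 4 (F y) = gamma * (1 - q) * coord 2 y - th4 * coord 4 y"
  "coord 5 (F y) = c1 * coord 1 y + c2 * coord 2 y + c3 * coord 3 y + c4 * coord 4 y - d5 * coord 5 y"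
  by (cases y rule: prod_cases6,
      simp add: seiruc_rhs_def Let_def force_def total_def numeral_eq_Suc algebra_simps)+

definition lin :: "state \<Rightarrow> state" where
  "lin y = (- delta * coord 0 y, - th1 * coord 1 y, a * coord 1 y - th2 * coord 2 y,
     gamma * q * coord 2 y - th3 * coord 3 y + eta * coord 4 y,
     gamma * (1 - q) * coord 2 y - th4 * coord 4 y,
     c1 * coord 1 y + c2 * coord 2 y + c3 * coord 3 y + c4 * coord 4 y - d5 * coord 5 y)"

lemma F_eq_lin_force: "F y = (Lam, 0, 0, 0, 0, 0) + lin y + force y *\<^sub>R (-1, 1, 0, 0, 0, 0)"
  by (cases y rule: prod_cases6)
    (simp add: seiruc_rhs_def Let_def force_def total_def lin_def numeral_eq_Suc algebra_simps
      flip: add_divide_distrib)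

lemma bounded_linear_lin: "bounded_linear lin"
  unfolding lin_def
  by (intro bounded_linear_Pair bounded_linear_add bounded_linear_sub bounded_linear_minus
      bounded_linear_mult_right bounded_linear_coord bounded_linear_compose[OF bounded_linear_mult_right]) simp_all

definition cube :: "real \<Rightarrow> state set" where
  "cube r = cbox (dfe - (r, r, r, r, r, r)) (dfe + (r, r, r, r, r, r))"

lemma mem_cube: "y \<in> cube r \<longleftrightarrow> (\<forall>i<6. \<bar>coord i y - coord i dfe\<bar> \<le> r)"
  by (cases y rule: prod_cases6) (simp add: cube_def cbox_Pair_eq all_less_6 abs_le_iff, linarith)

lemma cball_subset_cube: "cball dfe r \<subseteq> cube r"
proof
  fix y assume "y \<in> cball dfe r"
  then have "dist y dfe \<le> r" by (simp add: dist_commute)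
  then show "y \<in> cube r"
    unfolding mem_cube using abs_coord_diff_le_dist[of _ y dfe] by (meson order_trans)
qed

lemma cube_bounds:
  assumes y: "y \<in> cube r" and r: "20 * r \<le> \<kappa> * S0" and \<kappa>: "0 < \<kappa>" "\<kappa> \<le> 1"
  shows "S0 / 2 \<le> total y" "total y \<le> 2 * S0" "\<bar>coord 0 y\<bar> \<le> 2 * S0"
    "\<bar>coord 2 y + coord 3 y + coord 4 y\<bar> \<le> 2 * S0"
    "1 - \<kappa> \<le> coord 0 y / total y" "coord 0 y / total y \<le> 1 + \<kappa>"
proof -
  have c: "\<bar>coord 0 y - S0\<bar> \<le> r" "\<bar>coord 1 y\<bar> \<le> r" "\<bar>coord 2 y\<bar> \<le> r"
    "\<bar>coord 3 y\<bar> \<le> r" "\<bar>coord 4 y\<bar> \<le> r" "\<bar>coord 5 y\<bar> \<le> r"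
    using y by (simp_all add: mem_cube all_less_6)
  have r0: "0 \<le> r" and \<kappa>r: "0 \<le> \<kappa> * r" "\<kappa> * r \<le> r"
    using c(2) \<kappa> by (auto simp: mult_left_le_one_le)
  have "\<kappa> * S0 \<le> S0" by (rule mult_left_le_one_le) (use \<kappa> S0_pos in auto)
  then have rS: "20 * r \<le> S0" using r by linarith
  have N: "S0 - 6 * r \<le> total y" "total y \<le> S0 + 6 * r"
    using c by (simp_all add: total_def numeral_eq_Suc abs_le_iff)
  show "S0 / 2 \<le> total y" "total y \<le> 2 * S0" using N rS r0 by linarith+
  show "\<bar>coord 0 y\<bar> \<le> 2 * S0" "\<bar>coord 2 y + coord 3 y + coord 4 y\<bar> \<le> 2 * S0"
    using c[unfolded abs_le_iff] rS r0 unfolding abs_le_iff by linarith+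
  have Npos: "0 < total y" using N rS S0_pos by linarith
  have "S0 + r \<le> (1 + \<kappa>) * (S0 - 6 * r)" using r \<kappa>r by (simp add: algebra_simps)
  also have "\<dots> \<le> (1 + \<kappa>) * total y" using N \<kappa> by (intro mult_left_mono) auto
  finally have "coord 0 y \<le> (1 + \<kappa>) * total y" using c(1) by (simp add: abs_le_iff)
  then show "coord 0 y / total y \<le> 1 + \<kappa>" using Npos by (simp add: divide_le_eq)
  have "(1 - \<kappa>) * total y \<le> (1 - \<kappa>) * (S0 + 6 * r)" using N \<kappa> by (intro mult_left_mono) auto
  also have "\<dots> \<le> S0 - r" using r \<kappa>r by (simp add: algebra_simps)
  finally have "(1 - \<kappa>) * total y \<le> coord 0 y" using c(1) by (simp add: abs_le_iff)
  then show "1 - \<kappa> \<le> coord 0 y / total y" using Npos by (simp add: le_divide_eq)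
qed

lemma force_lipschitz_on_cube:
  assumes "20 * r \<le> S0"
  shows "(160 * beta)-lipschitz_on (cube r) force"
proof (rule lipschitz_onI)
  fix y z assume y: "y \<in> cube r" and z: "z \<in> cube r"
  note y_bounds = cube_bounds[OF y, of 1] and z_bounds = cube_bounds[OF z, of 1]
  have d: "\<bar>coord i y - coord i z\<bar> \<le> dist y z" if "i < 6" for i
    using abs_coord_diff_le_dist[OF that] .
  let ?A = "\<lambda>y. coord 2 y + coord 3 y + coord 4 y"
  have "\<bar>total y - total z\<bar> \<le> 6 * dist y z"
    using d[of 0] d[of 1] d[of 2] d[of 3] d[of 4] d[of 5]
    by (simp add: total_def numeral_eq_Suc abs_le_iff)
  moreover have "\<bar>?A y - ?A z\<bar> \<le> 3 * dist y z"
    using d[of 2] d[of 3] d[of 4] by (simp add: abs_le_iff)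
  ultimately have sum_le: "\<bar>coord 0 y - coord 0 z\<bar> + \<bar>total y - total z\<bar> + \<bar>?A y - ?A z\<bar> \<le> 10 * dist y z"
    using d[of 0] by linarith
  have sixteen: "2 * S0 * (2 * S0) / (S0 / 2 * (S0 / 2)) = 16" using S0_pos by (simp add: field_simps)
  have "\<bar>coord 0 y / total y * ?A y - coord 0 z / total z * ?A z\<bar>
    \<le> 2 * S0 * (2 * S0) / (S0 / 2 * (S0 / 2)) *
      (\<bar>coord 0 y - coord 0 z\<bar> + \<bar>total y - total z\<bar> + \<bar>?A y - ?A z\<bar>)"
    by (rule abs_ratio_product_diff_le) (use y_bounds z_bounds assms S0_pos in auto)
  also have "\<dots> \<le> 16 * (10 * dist y z)" unfolding sixteen using sum_le by simp
  finally have "beta * \<bar>coord 0 y / total y * ?A y - coord 0 z / total z * ?A z\<bar>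
      \<le> beta * (160 * dist y z)"
    using pos(2) by (intro mult_left_mono) simp_all
  moreover have "force y - force z = beta * (coord 0 y / total y * ?A y - coord 0 z / total z * ?A z)"
    by (simp add: force_def algebra_simps)
  ultimately show "dist (force y) (force z) \<le> 160 * beta * dist y z"
    using pos(2) by (simp add: dist_real_def abs_mult)
qed (use pos in simp)

lemma lipschitz_on_cube:
  assumes "20 * r \<le> S0"
  obtains L where "L-lipschitz_on (cube r) F"
proof -
  obtain B where B: "B-lipschitz_on (cube r) lin"
    using bounded_linear.lipschitz_boundE[OF bounded_linear_lin] by blast
  define v :: state where "v = (-1, 1, 0, 0, 0, 0)"
  have "(160 * beta * norm v)-lipschitz_on (cube r) (\<lambda>y. force y *\<^sub>R v)"
  proof (rule lipschitz_onI)
    fix y z assume "y \<in> cube r" "z \<in> cube r"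
    then have "dist (force y) (force z) \<le> 160 * beta * dist y z"
      by (rule lipschitz_onD[OF force_lipschitz_on_cube[OF assms]])
    then have "\<bar>force y - force z\<bar> * norm v \<le> 160 * beta * dist y z * norm v"
      by (intro mult_right_mono) (simp_all add: dist_real_def)
    then show "dist (force y *\<^sub>R v) (force z *\<^sub>R v) \<le> 160 * beta * norm v * dist y z"
      by (simp add: dist_norm mult_ac flip: scaleR_diff_left)
  qed (use pos in simp)
  then have "(0 + B + 160 * beta * norm v)-lipschitz_on (cube r)
      (\<lambda>y. (Lam, 0, 0, 0, 0, 0) + lin y + force y *\<^sub>R v)"
    by (intro lipschitz_on_add lipschitz_on_constant B)
  then show ?thesis using that F_eq_lin_force unfolding v_def by simp
qed

lemma lipschitz_extension_near_dfe:
  assumes "20 * r \<le> S0" "0 \<le> r"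
  obtains G L where "0 < L" "L-lipschitz_on UNIV G" "\<And>y. dist y dfe \<le> r \<Longrightarrow> G y = F y"
proof -
  define lo hi where "lo = dfe - (r, r, r, r, r, r)" and "hi = dfe + (r, r, r, r, r, r)"
  have cube: "cube r = cbox lo hi" by (simp add: cube_def lo_def hi_def)
  obtain L where L: "L-lipschitz_on (cube r) F" using lipschitz_on_cube[OF assms(1)] .
  have "1-lipschitz_on UNIV (clamp lo hi)"
    using dist_clamps_le_dist_args by (intro lipschitz_onI) auto
  moreover have "clamp lo hi ` UNIV \<subseteq> cube r"
  proof -
    have "dfe \<in> cube r" using assms(2) by (simp add: mem_cube all_less_6)
    then have "\<forall>i\<in>Basis. lo \<bullet> i \<le> hi \<bullet> i"
      using box_ne_empty(1) unfolding cube by blast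
    then show ?thesis unfolding cube by (auto intro: clamp_in_interval)
  qed
  ultimately have "(L * 1)-lipschitz_on UNIV (\<lambda>y. F (clamp lo hi y))"
    using L by (intro lipschitz_on_compose2) (auto intro: lipschitz_on_subset)
  then have "(L + 1)-lipschitz_on UNIV (\<lambda>y. F (clamp lo hi y))"
    by (rule lipschitz_on_mono) auto
  moreover have "0 < L + 1" using lipschitz_on_nonneg[OF L] by simp
  moreover have "F (clamp lo hi y) = F y" if "dist y dfe \<le> r" for y
  proof -
    have "y \<in> cball dfe r" using that by (simp add: dist_commute)
    then show ?thesis using cball_subset_cube by (force simp: cube)
  qed
  ultimately show ?thesis using that by blast
qed

end

section \<open>Weights from the basic reproduction number\<close>

lemma small_positive_witness:
  fixes f :: "real \<Rightarrow> real"
  assumes "0 < f 0" "isCont f 0" "0 < c"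
  obtains k where "0 < k" "k < c" "0 < f k"
proof -
  have "eventually (\<lambda>k. 0 < f k) (at 0)"
    using assms(2,1) unfolding isCont_def by (rule order_tendstoD(1))
  then obtain d where d: "0 < d" "\<And>k. k \<noteq> 0 \<Longrightarrow> dist k 0 < d \<Longrightarrow> 0 < f k"
    unfolding eventually_at by blast
  show ?thesis
    using d assms(3) by (intro that[of "min d c / 2"]) (auto simp: dist_real_def)
qed

context seiruc
begin

definition P :: real where "P = gamma * (1 - q) * (eta + th3) + th4 * (th3 + q * gamma)"

lemma th_pos: "0 < th1" "0 < th2" "0 < th3" "0 < th4"
  using pos by simp_all

lemma R0_eq: "R0 = a * beta * (P / (th3 * th4)) / (th1 * th2)"
proof -
  have "R0 = (Lam * (a * beta * P)) / (Lam * (th1 * th2 * th3 * th4))"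
    using pos unfolding seiruc_R0_def Let_def P_def by (simp add: ac_simps)
  then show ?thesis using pos by (simp add: mult_ac)
qed

lemma R0_less_1_iff: "R0 < 1 \<longleftrightarrow> a * beta * (P / (th3 * th4)) < th1 * th2"
  using th_pos by (simp add: R0_eq divide_less_eq mult_ac)

lemma R0_greater_1_iff: "1 < R0 \<longleftrightarrow> th1 * th2 < a * beta * (P / (th3 * th4))"
  using th_pos by (simp add: R0_eq less_divide_eq mult_ac)

lemma one_plus_U_R_ratio:
  "1 + gamma * (1 - q) / th4 + (gamma * q + eta * (gamma * (1 - q) / th4)) / th3 = P / (th3 * th4)"
proof -
  have "1 + gamma * (1 - q) / t4 + (gamma * q + eta * (gamma * (1 - q) / t4)) / t3
      = (gamma * (1 - q) * (eta + t3) + t4 * (t3 + q * gamma)) / (t3 * t4)"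
    if "t3 \<noteq> 0" "t4 \<noteq> 0" for t3 t4 :: real
    using that by (simp add: field_simps)
  then show ?thesis unfolding P_def using th_pos by simp
qed

end

text \<open>Each row says that the corresponding equation, with \<open>S/N \<le> 1 + k\<close> in the force of
  infection, pushes the box \<open>|x\<^sub>i - e\<^sub>i| \<le> \<rho> w\<^sub>i\<close> inward faster than it shrinks at rate \<open>k\<close>;
  the weight of \<open>I\<close> is normalised to 1.\<close>

locale seiruc_decay_weights = seiruc +
  fixes k wS vE vR vU wC :: real
  assumes k: "0 < k" "k \<le> 1"
    and weights_pos: "0 < wS" "0 < vE" "0 < vR" "0 < vU" "0 < wC"
    and S_row: "beta * (1 + k) * (1 + vU + vR) < (delta - k) * wS"
    and E_row: "beta * (1 + k) * (1 + vU + vR) < (th1 - k) * vE"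
    and I_row: "a * vE < th2 - k"
    and R_row: "gamma * q + eta * vU < (th3 - k) * vR"
    and U_row: "gamma * (1 - q) < (th4 - k) * vU"
    and C_row: "c1 * vE + c2 + c3 * vR + c4 * vU < (d5 - k) * wC"

context seiruc
begin

lemma decay_weights_exist:
  assumes "R0 < 1"
  obtains k wS vE vR vU wC
  where "seiruc_decay_weights Lam beta delta a gamma eta d1 d2 d3 d4 d5 c1 c2 c3 c4 q k wS vE vR vU wC"
proof -
  \<comment> \<open>All rows but the \<open>E\<close>-row can be met by choice of the weights; at \<open>k = 0\<close> the \<open>E\<close>-row
    is equivalent to \<open>R0 < 1\<close>, and continuity in \<open>k\<close> yields a positive rate.\<close>
  define vU where "vU k = (gamma * (1 - q) + k) / (th4 - k)" for k
  define vR where "vR k = (gamma * q + eta * vU k + k) / (th3 - k)" for k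
  define vE where "vE k = (th2 - 2 * k) / a" for k
  define \<phi> where "\<phi> k = (th1 - k) * vE k - beta * (1 + k) * (1 + vU k + vR k)" for k
  have "1 + vU 0 + vR 0 = P / (th3 * th4)"
    using one_plus_U_R_ratio by (simp add: vU_def vR_def)
  then have "\<phi> 0 = th1 * th2 / a - beta * (P / (th3 * th4))" by (simp add: \<phi>_def vE_def)
  moreover have "beta * (P / (th3 * th4)) < th1 * th2 / a"
    using assms pos unfolding R0_less_1_iff by (simp add: less_divide_eq mult_ac)
  ultimately have "0 < \<phi> 0" by simp
  moreover have "isCont \<phi> 0"
    unfolding isCont_def \<phi>_def vE_def vR_def vU_def by (intro tendsto_intros) (use th_pos pos in simp_all)
  moreover have "0 < min (min 1 (th2 / 2)) (min (min th3 th4) (min delta d5))"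
    using th_pos pos by simp
  ultimately obtain k where k: "0 < k" "k < min (min 1 (th2 / 2)) (min (min th3 th4) (min delta d5))"
    and \<phi>: "0 < \<phi> k"
    by (rule small_positive_witness)
  have vU: "0 < vU k" and vR: "0 < vR k" and vE: "0 < vE k"
    using k pos by (auto simp: vU_def vR_def vE_def intro!: divide_pos_pos add_nonneg_pos)
  define wS where "wS = (beta * (1 + k) * (1 + vU k + vR k) + 1) / (delta - k)"
  define wC where "wC = (c1 * vE k + c2 + c3 * vR k + c4 * vU k + 1) / (d5 - k)"
  have "seiruc_decay_weights Lam beta delta a gamma eta d1 d2 d3 d4 d5 c1 c2 c3 c4 q
      k wS (vE k) (vR k) (vU k) wC"
  proof (intro seiruc_decay_weights.intro seiruc_axioms seiruc_decay_weights_axioms.intro)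
    show "0 < wS" "0 < wC"
      using k pos vE vR vU unfolding wS_def wC_def by (auto intro!: divide_pos_pos add_nonneg_pos)
    show "beta * (1 + k) * (1 + vU k + vR k) < (delta - k) * wS"
      "c1 * vE k + c2 + c3 * vR k + c4 * vU k < (d5 - k) * wC"
      using k unfolding wS_def wC_def by simp_all
    show "beta * (1 + k) * (1 + vU k + vR k) < (th1 - k) * vE k" using \<phi> by (simp add: \<phi>_def)
    show "a * vE k < th2 - k" "gamma * q + eta * vU k < (th3 - k) * vR k"
      "gamma * (1 - q) < (th4 - k) * vU k"
      using k pos by (simp_all add: vE_def vR_def vU_def)
  qed (use k vE vR vU in auto)
  then show ?thesis by (rule that)
qed

end

text \<open>The analogue for the cone \<open>E \<ge> \<rho> vE, I \<ge> \<rho>, R \<ge> \<rho> vR, U \<ge> \<rho> vU\<close> with \<open>S/N \<ge> 1 - k\<close>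
  and growth rate \<open>k\<close>.\<close>

locale seiruc_growth_weights = seiruc +
  fixes k vE vR vU :: real
  assumes k: "0 < k" "k \<le> 1"
    and vU_eq: "(th4 + k) * vU = gamma * (1 - q)"
    and vR_eq: "(th3 + k) * vR = gamma * q + eta * vU"
    and I_row: "th2 + k < a * vE"
    and E_row: "(th1 + k) * vE < beta * (1 - k) * (1 + vR + vU)"

context seiruc
begin

lemma growth_weights_exist:
  assumes "1 < R0"
  obtains k vE vR vU
  where "seiruc_growth_weights Lam beta delta a gamma eta d1 d2 d3 d4 d5 c1 c2 c3 c4 q k vE vR vU"
proof -
  \<comment> \<open>At \<open>k = 0\<close> a weight \<open>vE\<close> satisfying the \<open>I\<close>- and \<open>E\<close>-rows exists iff \<open>R0 > 1\<close>.\<close>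
  define vU where "vU k = gamma * (1 - q) / (th4 + k)" for k
  define vR where "vR k = (gamma * q + eta * vU k) / (th3 + k)" for k
  define \<psi> where "\<psi> k = beta * (1 - k) * (1 + vR k + vU k) * a - (th1 + k) * (th2 + k)" for k
  have "1 + vR 0 + vU 0 = P / (th3 * th4)"
    using one_plus_U_R_ratio by (simp add: vU_def vR_def add_ac)
  then have "\<psi> 0 = a * beta * (P / (th3 * th4)) - th1 * th2" by (simp add: \<psi>_def mult_ac)
  then have "0 < \<psi> 0" using assms unfolding R0_greater_1_iff by simp
  moreover have "isCont \<psi> 0"
    unfolding isCont_def \<psi>_def vR_def vU_def by (intro tendsto_intros) (use th_pos in simp_all)
  ultimately obtain k where k: "0 < k" "k < 1" and \<psi>: "0 < \<psi> k"
    using zero_less_one by (rule small_positive_witness)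
  define X where "X = beta * (1 - k) * (1 + vR k + vU k)"
  have "(th2 + k) * (th1 + k) < X * a" using \<psi> by (simp add: \<psi>_def X_def mult_ac)
  then have lt: "(th2 + k) / a < X / (th1 + k)"
  proof -
    have "y / u < z / w" if "y * w < z * u" "0 < u" "0 < w" for y z u w :: real
      using that by (simp add: field_simps)
    then show ?thesis using \<open>(th2 + k) * (th1 + k) < X * a\<close> th_pos k pos by simp
  qed
  define vE where "vE = ((th2 + k) / a + X / (th1 + k)) / 2"
  have "seiruc_growth_weights Lam beta delta a gamma eta d1 d2 d3 d4 d5 c1 c2 c3 c4 q k vE (vR k) (vU k)"
  proof (intro seiruc_growth_weights.intro seiruc_axioms seiruc_growth_weights_axioms.intro)
    show "0 < k" "k \<le> 1" using k by simp_all
    show "(th4 + k) * vU k = gamma * (1 - q)" "(th3 + k) * vR k = gamma * q + eta * vU k"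
      using th_pos k by (simp_all add: vU_def vR_def)
    have "(th2 + k) / a < vE" unfolding vE_def by (rule field_less_half_sum[OF lt])
    then show "th2 + k < a * vE" using pos by (simp add: divide_less_eq mult.commute)
    have "vE < X / (th1 + k)" using gt_half_sum[OF lt] by (simp add: vE_def)
    then show "(th1 + k) * vE < beta * (1 - k) * (1 + vR k + vU k)"
      using th_pos k by (simp add: less_divide_eq mult.commute X_def)
  qed
  then show ?thesis by (rule that)
qed

end

section \<open>Stability below the threshold\<close>

lemma sign_row_bound:
  fixes \<sigma> \<rho> w u U \<theta> k z :: real
  assumes \<sigma>: "\<sigma> = 1 \<or> \<sigma> = -1" and z: "z = \<sigma> * \<rho> * w"
    and u: "\<bar>u\<bar> \<le> \<rho> * U" and row: "U < (\<theta> - k) * w" and \<rho>: "0 < \<rho>"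
  shows "\<sigma> * (u - \<theta> * z) < - k * \<rho> * w"
proof -
  have "\<sigma> * (u - \<theta> * z) = \<sigma> * u - \<theta> * (\<rho> * w)" using \<sigma> z by (auto simp: algebra_simps)
  also have "\<sigma> * u \<le> \<rho> * U" using \<sigma> u by auto
  also have "\<rho> * U < \<rho> * ((\<theta> - k) * w)" using row \<rho> by simp
  finally show ?thesis by (simp add: algebra_simps)
qed

lemma abs_scale_le: "0 \<le> c \<Longrightarrow> \<bar>x\<bar> \<le> b \<Longrightarrow> \<bar>c * x\<bar> \<le> c * b"
  for c x b :: real
  by (simp add: abs_mult mult_left_mono)

lemma abs_add_le: "\<bar>x\<bar> \<le> a \<Longrightarrow> \<bar>y\<bar> \<le> b \<Longrightarrow> \<bar>x + y\<bar> \<le> a + b"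
  for x y a b :: real
  by (auto simp: abs_le_iff)

context seiruc_decay_weights
begin

definition weight :: "nat \<Rightarrow> real" where
  "weight i = [wS, vE, 1, vR, vU, wC] ! i"

lemma weight_pos: "i < 6 \<Longrightarrow> 0 < weight i"
  using weights_pos unfolding less_6_cases weight_def by (elim disjE) simp_all

abbreviation in_weighted_box :: "real \<Rightarrow> state \<Rightarrow> bool" where
  "in_weighted_box \<rho> y \<equiv> \<forall>j<6. \<bar>coord j y - coord j dfe\<bar> \<le> \<rho> * weight j"

lemma weighted_box_coords:
  assumes "in_weighted_box \<rho> y"
  shows "\<bar>coord 0 y - S0\<bar> \<le> \<rho> * wS" "\<bar>coord 1 y\<bar> \<le> \<rho> * vE" "\<bar>coord 2 y\<bar> \<le> \<rho>"
    "\<bar>coord 3 y\<bar> \<le> \<rho> * vR" "\<bar>coord 4 y\<bar> \<le> \<rho> * vU" "\<bar>coord 5 y\<bar> \<le> \<rho> * wC"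
  using assms by (simp_all add: all_less_6 weight_def)

lemma abs_force_le:
  assumes y: "y \<in> cube (S0 * k / 20)" and \<rho>: "0 < \<rho>" and box: "in_weighted_box \<rho> y"
  shows "\<bar>force y\<bar> \<le> \<rho> * (beta * (1 + k) * (1 + vU + vR))"
proof -
  note b = weighted_box_coords[OF box]
  have ratio: "0 \<le> coord 0 y / total y" "coord 0 y / total y \<le> 1 + k"
    using cube_bounds[OF y _ k(1,2)] k by simp_all
  have "\<bar>coord 2 y + coord 3 y + coord 4 y\<bar> \<le> \<rho> * (1 + vU + vR)"
    using b(3-5) by (simp add: abs_le_iff algebra_simps)
  then have "\<bar>coord 0 y / total y * (coord 2 y + coord 3 y + coord 4 y)\<bar>
      \<le> coord 0 y / total y * (\<rho> * (1 + vU + vR))"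
    by (rule abs_scale_le[OF ratio(1)])
  also have "\<dots> \<le> (1 + k) * (\<rho> * (1 + vU + vR))"
    using ratio(2) \<rho> weights_pos by (intro mult_right_mono) auto
  finally show ?thesis
    using pos(2) abs_scale_le[of beta] by (fastforce simp: force_def mult_ac)
qed

lemma inflow_bounds:
  assumes box: "in_weighted_box \<rho> y"
  shows "\<bar>a * coord 1 y\<bar> \<le> \<rho> * (a * vE)"
    and "\<bar>gamma * q * coord 2 y + eta * coord 4 y\<bar> \<le> \<rho> * (gamma * q + eta * vU)"
    and "\<bar>gamma * (1 - q) * coord 2 y\<bar> \<le> \<rho> * (gamma * (1 - q))"
    and "\<bar>c1 * coord 1 y + c2 * coord 2 y + c3 * coord 3 y + c4 * coord 4 y\<bar>
      \<le> \<rho> * (c1 * vE + c2 + c3 * vR + c4 * vU)"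
proof -
  note b = weighted_box_coords[OF box]
  show "\<bar>a * coord 1 y\<bar> \<le> \<rho> * (a * vE)" "\<bar>gamma * (1 - q) * coord 2 y\<bar> \<le> \<rho> * (gamma * (1 - q))"
    using abs_scale_le[OF _ b(2), of a] abs_scale_le[OF _ b(3), of "gamma * (1 - q)"] pos
    by (simp_all add: mult_ac)
  have "\<bar>gamma * q * coord 2 y + eta * coord 4 y\<bar> \<le> gamma * q * \<rho> + eta * (\<rho> * vU)"
    using pos by (intro abs_add_le abs_scale_le b) auto
  then show "\<bar>gamma * q * coord 2 y + eta * coord 4 y\<bar> \<le> \<rho> * (gamma * q + eta * vU)"
    by (simp add: algebra_simps)
  have "\<bar>c1 * coord 1 y + c2 * coord 2 y + c3 * coord 3 y + c4 * coord 4 y\<bar>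
      \<le> c1 * (\<rho> * vE) + c2 * \<rho> + c3 * (\<rho> * vR) + c4 * (\<rho> * vU)"
    using pos by (intro abs_add_le abs_scale_le b) auto
  then show "\<bar>c1 * coord 1 y + c2 * coord 2 y + c3 * coord 3 y + c4 * coord 4 y\<bar>
      \<le> \<rho> * (c1 * vE + c2 + c3 * vR + c4 * vU)"
    by (simp add: algebra_simps)
qed

lemma weighted_box_inward:
  assumes y: "y \<in> cube (S0 * k / 20)" and \<rho>: "0 < \<rho>" and box: "in_weighted_box \<rho> y"
    and i: "i < 6" and \<sigma>: "\<sigma> = 1 \<or> \<sigma> = -1"
    and touch: "coord i y - coord i dfe = \<sigma> * \<rho> * weight i"
  shows "\<sigma> * coord i (F y) < - k * \<rho> * weight i"
proof -
  note force = abs_force_le[OF y \<rho> box] and inflow = inflow_bounds[OF box]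
  note row = sign_row_bound[OF \<sigma> _ _ _ \<rho>]
  consider "i = 0" | "i = 1" | "i = 2" | "i = 3" | "i = 4" | "i = 5"
    using i unfolding less_6_cases by blast
  then show ?thesis
  proof cases
    case 1
    have "\<sigma> * (- force y - delta * (coord 0 y - S0)) < - k * \<rho> * wS"
      using force touch[unfolded 1] S_row by (intro row) (simp_all add: weight_def)
    then show ?thesis unfolding 1 coord_F weight_def using delta_S0 by (simp add: algebra_simps)
  next
    case 2
    have "\<sigma> * (force y - th1 * coord 1 y) < - k * \<rho> * vE"
      using force touch[unfolded 2] E_row by (intro row) (simp_all add: weight_def)
    then show ?thesis unfolding 2 coord_F weight_def by simp
  next
    case 3
    have "\<sigma> * (a * coord 1 y - th2 * coord 2 y) < - k * \<rho> * 1"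
      using inflow(1) touch[unfolded 3] I_row by (intro row) (simp_all add: weight_def)
    then show ?thesis unfolding 3 coord_F weight_def by simp
  next
    case 4
    have "\<sigma> * ((gamma * q * coord 2 y + eta * coord 4 y) - th3 * coord 3 y) < - k * \<rho> * vR"
      using inflow(2) touch[unfolded 4] R_row by (intro row) (simp_all add: weight_def)
    then show ?thesis unfolding 4 coord_F weight_def by (simp add: algebra_simps)
  next
    case 5
    have "\<sigma> * (gamma * (1 - q) * coord 2 y - th4 * coord 4 y) < - k * \<rho> * vU"
      using inflow(3) touch[unfolded 5] U_row by (intro row) (simp_all add: weight_def)
    then show ?thesis unfolding 5 coord_F weight_def by simp
  next
    case 6
    have "\<sigma> * ((c1 * coord 1 y + c2 * coord 2 y + c3 * coord 3 y + c4 * coord 4 y) - d5 * coord 5 y)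
        < - k * \<rho> * wC"
      using inflow(4) touch[unfolded 6] C_row by (intro row) (simp_all add: weight_def)
    then show ?thesis unfolding 6 coord_F weight_def by simp
  qed
qed

lemma dist_le_weighted_box:
  assumes "in_weighted_box \<rho> y"
  shows "dist y dfe \<le> \<rho> * (\<Sum>j<6. weight j)"
proof -
  have "dist y dfe \<le> (\<Sum>j<6. \<bar>coord j y - coord j dfe\<bar>)" by (rule dist_le_sum_coords)
  also have "\<dots> \<le> (\<Sum>j<6. \<rho> * weight j)" using assms by (intro sum_mono) auto
  finally show ?thesis by (simp add: sum_distrib_left)
qed

lemma weighted_box_near_dfe:
  assumes box: "in_weighted_box \<rho> y" and small: "\<rho> * (\<Sum>j<6. weight j) \<le> S0 * k / 20"
  shows "dist y dfe \<le> S0 * k / 20" "y \<in> cube (S0 * k / 20)"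
proof -
  show near: "dist y dfe \<le> S0 * k / 20" using dist_le_weighted_box[OF box] small by linarith
  have "y \<in> cball dfe (S0 * k / 20)" using near by (simp add: dist_commute)
  then show "y \<in> cube (S0 * k / 20)" using cball_subset_cube by blast
qed

lemma weighted_box_decay:
  assumes agree: "\<And>y. dist y dfe \<le> S0 * k / 20 \<Longrightarrow> H y = F y"
    and R: "0 < R" "R * (\<Sum>j<6. weight j) \<le> S0 * k / 20"
    and sol: "solves_on H x {0..<T}"
    and x0: "\<forall>j<6. \<bar>coord j (x 0) - coord j dfe\<bar> < R * weight j"
    and t: "0 \<le> t" "t < T"
  shows "\<forall>j<6. \<bar>coord j (x t) - coord j dfe\<bar> < R * exp (- k * t) * weight j"
proof -
  define \<rho> where "\<rho> s = R * exp (- k * s)" for s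
  have "\<forall>j\<in>{..<6}. \<bar>coord j (x t) - coord j dfe\<bar> < \<rho> t * weight j"
  proof (rule solves_on_inside_barriers[OF _ sol _ _ _ _ t, where c = "\<lambda>j. coord j dfe"
        and w = "\<lambda>j s. \<rho> s * weight j" and w' = "\<lambda>j s. - k * \<rho> s * weight j"])
    show "bounded_linear (coord j)" if "j \<in> {..<6}" for j
      using that by (simp add: bounded_linear_coord)
    show "((\<lambda>s. \<rho> s * weight j) has_real_derivative - k * \<rho> s * weight j) (at s)" for j s
      unfolding \<rho>_def by (auto intro!: derivative_eq_intros)
    show "\<bar>coord j (x 0) - coord j dfe\<bar> < \<rho> 0 * weight j" if "j \<in> {..<6}" for j
      using x0 that by (simp add: \<rho>_def)
  next
    fix i s \<sigma> assume i: "i \<in> {..<6}" and s: "0 < s" "s < T"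
      and box: "\<forall>j\<in>{..<6}. \<bar>coord j (x s) - coord j dfe\<bar> \<le> \<rho> s * weight j"
      and \<sigma>: "\<sigma> = 1 \<or> \<sigma> = -1" and touch: "coord i (x s) - coord i dfe = \<sigma> * (\<rho> s * weight i)"
    have box': "in_weighted_box (\<rho> s) (x s)" using box by simp
    have "\<rho> s \<le> R" using R k s by (simp add: \<rho>_def)
    moreover have "0 \<le> (\<Sum>j<6. weight j)" using weight_pos by (intro sum_nonneg less_imp_le) simp
    ultimately have "\<rho> s * (\<Sum>j<6. weight j) \<le> S0 * k / 20"
      using R(2) by (meson mult_right_mono order_trans)
    note near = weighted_box_near_dfe[OF box' this]
    have "\<sigma> * coord i (F (x s)) < - k * \<rho> s * weight i"
      using weighted_box_inward[OF near(2) _ box' _ \<sigma>] i touch R(1) by (simp add: \<rho>_def mult_ac)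
    then show "\<sigma> * coord i (H (x s)) < - k * \<rho> s * weight i"
      using agree[OF near(1)] by simp
  qed simp
  then show ?thesis by (simp add: \<rho>_def)
qed

definition weight_min :: real where
  "weight_min = Min (weight ` {..<6})"

lemma weight_min_le: "i < 6 \<Longrightarrow> weight_min \<le> weight i"
  unfolding weight_min_def by (intro Min_le) simp_all

lemma weight_min_pos: "0 < weight_min"
proof -
  have "weight_min \<in> weight ` {..<6}" unfolding weight_min_def by (intro Min_in) (simp_all add: lessThan_empty_iff)
  then show ?thesis using weight_pos by auto
qed

definition decay_const :: real where
  "decay_const = (\<Sum>j<6. weight j) / weight_min"

lemma decay_const_pos: "0 < decay_const"
  unfolding decay_const_def using weight_pos weight_min_pos
  by (intro divide_pos_pos sum_pos) (simp_all add: lessThan_empty_iff)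

lemma exponential_bound:
  assumes agree: "\<And>y. dist y dfe \<le> S0 * k / 20 \<Longrightarrow> H y = F y"
    and r: "0 < r" "decay_const * r \<le> S0 * k / 20"
    and sol: "solves_on H x {0..<T}" and x0: "dist (x 0) dfe < r" and t: "0 \<le> t" "t < T"
  shows "dist (x t) dfe \<le> decay_const * r * exp (- k * t)"
proof -
  define R where "R = r / weight_min"
  have R: "0 < R" "R * (\<Sum>j<6. weight j) = decay_const * r"
    using r weight_min_pos by (simp_all add: R_def decay_const_def)
  have "\<forall>j<6. \<bar>coord j (x 0) - coord j dfe\<bar> < R * weight j"
  proof (intro allI impI)
    fix j :: nat assume j: "j < 6"
    have "\<bar>coord j (x 0) - coord j dfe\<bar> \<le> dist (x 0) dfe" using abs_coord_diff_le_dist[OF j] .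
    also have "\<dots> < R * weight_min" using x0 weight_min_pos by (simp add: R_def)
    also have "\<dots> \<le> R * weight j" using R weight_min_le[OF j] by simp
    finally show "\<bar>coord j (x 0) - coord j dfe\<bar> < R * weight j" .
  qed
  then have "\<forall>j<6. \<bar>coord j (x t) - coord j dfe\<bar> < R * exp (- k * t) * weight j"
    using weighted_box_decay[OF agree R(1) _ sol _ t] R r by simp
  then have "dist (x t) dfe \<le> R * exp (- k * t) * (\<Sum>j<6. weight j)"
    by (intro dist_le_weighted_box) (auto simp: less_imp_le)
  then have "dist (x t) dfe \<le> (R * (\<Sum>j<6. weight j)) * exp (- k * t)" by (simp add: mult_ac)
  then show ?thesis unfolding R(2) .
qed

end

context seiruc
begin

theorem loc_asym_stable_if_R0_lt_1:
  assumes "R0 < 1"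
  shows "loc_asym_stable F dfe"
proof -
  obtain k wS vE vR vU wC
    where "seiruc_decay_weights Lam beta delta a gamma eta d1 d2 d3 d4 d5 c1 c2 c3 c4 q k wS vE vR vU wC"
    using decay_weights_exist[OF assms] .
  then interpret seiruc_decay_weights Lam beta delta a gamma eta d1 d2 d3 d4 d5 c1 c2 c3 c4 q
    k wS vE vR vU wC .
  have \<rho>: "0 < S0 * k / 20" "20 * (S0 * k / 20) \<le> S0" using S0_pos k by auto
  obtain G L where G: "0 < L" "L-lipschitz_on UNIV G" and agree: "\<And>y. dist y dfe \<le> S0 * k / 20 \<Longrightarrow> G y = F y"
    using lipschitz_extension_near_dfe[OF \<rho>(2) less_imp_le[OF \<rho>(1)]] by blast
  show ?thesis
  proof (rule loc_asym_stable_if_exponential_bound[OF G agree \<rho>(1) k(1) decay_const_pos])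
    fix H x T r t
    assume "\<And>y. dist y dfe \<le> S0 * k / 20 \<Longrightarrow> H y = F y" "0 < r" "decay_const * r \<le> S0 * k / 20"
      "solves_on H x {0..<T}" "dist (x 0) dfe < r" "0 \<le> t" "t < T"
    then show "dist (x t) dfe \<le> decay_const * r * exp (- k * t)" by (rule exponential_bound)
  qed
qed

end

section \<open>Instability above the threshold\<close>

context seiruc_growth_weights
begin

lemma growth_weights_nonneg: "0 \<le> vU" "0 \<le> vR" "0 < vE"
proof -
  have "0 \<le> (th4 + k) * vU" using vU_eq pos by simp
  then show "0 \<le> vU" using th_pos k by (simp add: zero_le_mult_iff)
  then have "0 \<le> (th3 + k) * vR" using vR_eq pos by simp
  then show "0 \<le> vR" using th_pos k by (simp add: zero_le_mult_iff)
  have "0 < a * vE" using I_row th_pos k by linarith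
  then show "0 < vE" using pos by (simp add: zero_less_mult_iff)
qed

lemma growth_cone_outward:
  assumes y: "y \<in> cube (S0 * k / 20)" and \<rho>: "0 < \<rho>" and \<mu>: "0 < \<mu>"
    and above: "\<rho> * vE \<le> coord 1 y" "\<rho> \<le> coord 2 y" "\<rho> * vR \<le> coord 3 y" "\<rho> * vU + \<mu> \<le> coord 4 y"
  shows "coord 1 y = \<rho> * vE \<Longrightarrow> k * \<rho> * vE < coord 1 (F y)"
    and "coord 2 y = \<rho> \<Longrightarrow> k * \<rho> < coord 2 (F y)"
    and "coord 3 y = \<rho> * vR \<Longrightarrow> k * \<rho> * vR < coord 3 (F y)"
    and "coord 4 y = \<rho> * vU + \<mu> \<Longrightarrow> k * \<rho> * vU - (th4 + 1) * \<mu> < coord 4 (F y)"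
proof -
  note w = growth_weights_nonneg
  assume E: "coord 1 y = \<rho> * vE"
  have "1 - k \<le> coord 0 y / total y" using cube_bounds[OF y _ k(1,2)] by simp
  moreover have "\<rho> * (1 + vR + vU) \<le> coord 2 y + coord 3 y + coord 4 y"
    using above \<mu> by (simp add: algebra_simps)
  moreover have "0 \<le> 1 - k" "0 \<le> \<rho> * (1 + vR + vU)" using k \<rho> w by simp_all
  ultimately have "(1 - k) * (\<rho> * (1 + vR + vU)) \<le> coord 0 y / total y * (coord 2 y + coord 3 y + coord 4 y)"
    by (intro mult_mono) auto
  then have "beta * (1 - k) * (1 + vR + vU) * \<rho> \<le> force y"
    using pos(2) mult_left_mono[of _ _ beta] by (fastforce simp: force_def mult_ac)
  moreover have "(th1 + k) * vE * \<rho> < beta * (1 - k) * (1 + vR + vU) * \<rho>"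
    using E_row \<rho> by simp
  ultimately show "k * \<rho> * vE < coord 1 (F y)" using E unfolding coord_F by (simp add: algebra_simps)
next
  assume "coord 2 y = \<rho>"
  moreover have "(th2 + k) * \<rho> < a * vE * \<rho>" using I_row \<rho> by simp
  moreover have "a * (\<rho> * vE) \<le> a * coord 1 y" using above(1) pos by simp
  ultimately show "k * \<rho> < coord 2 (F y)" unfolding coord_F by (simp add: algebra_simps)
next
  assume "coord 3 y = \<rho> * vR"
  moreover have "gamma * q * \<rho> \<le> gamma * q * coord 2 y" using above(2) pos by (simp add: mult_left_mono)
  moreover have "eta * (\<rho> * vU + \<mu>) \<le> eta * coord 4 y" using above(4) pos by simp
  moreover have "0 < eta * \<mu>" using pos \<mu> by simp
  moreover have "(th3 + k) * vR * \<rho> = (gamma * q + eta * vU) * \<rho>" using vR_eq by simp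
  ultimately show "k * \<rho> * vR < coord 3 (F y)" unfolding coord_F by (simp add: algebra_simps)
next
  assume "coord 4 y = \<rho> * vU + \<mu>"
  moreover have "gamma * (1 - q) * \<rho> \<le> gamma * (1 - q) * coord 2 y" using above(2) pos by (simp add: mult_left_mono)
  moreover have "(th4 + k) * vU * \<rho> = gamma * (1 - q) * \<rho>" using vU_eq by simp
  ultimately show "k * \<rho> * vU - (th4 + 1) * \<mu> < coord 4 (F y)"
    using \<mu> unfolding coord_F by (simp add: algebra_simps)
qed

lemma infected_growth:
  assumes agree: "\<And>y. dist y dfe \<le> S0 * k / 20 \<Longrightarrow> H y = F y"
    and sol: "solves_on H x {0..<T}" and near: "\<And>s. 0 \<le> s \<Longrightarrow> s < T \<Longrightarrow> dist (x s) dfe \<le> S0 * k / 20"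
    and r: "0 < r"
    and x0: "r * vE < coord 1 (x 0)" "r < coord 2 (x 0)" "r * vR < coord 3 (x 0)" "r * vU + r < coord 4 (x 0)"
    and t: "0 \<le> t" "t < T"
  shows "r * exp (k * t) < coord 2 (x t)"
proof -
  define \<rho> where "\<rho> s = r * exp (k * s)" for s
  \<comment> \<open>The decaying margin \<open>\<mu>\<close> on \<open>U\<close> makes the \<open>R\<close>- and \<open>U\<close>-barriers strict, although
    \<open>vR\<close> and \<open>vU\<close> solve their rows with equality (and \<open>vU = 0\<close> when \<open>q = 1\<close>).\<close>
  define \<mu> where "\<mu> s = r * exp (- (th4 + 1) * s)" for s
  define v where "v i = [0, vE, 1, vR, vU, 0] ! i" for i :: nat
  define b where "b i s = \<rho> s * v i + of_bool (i = 4) * \<mu> s" for i s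
  define b' where "b' i s = k * \<rho> s * v i - of_bool (i = 4) * (th4 + 1) * \<mu> s" for i s
  have pos_\<rho>\<mu>: "0 < \<rho> s" "0 < \<mu> s" for s using r by (simp_all add: \<rho>_def \<mu>_def)
  have "\<forall>i\<in>{1, 2, 3, 4}. b i t < coord i (x t)"
  proof (rule solves_on_above_barriers[OF _ sol _ _ _ _ t])
    show "bounded_linear (coord i)" if "i \<in> {1, 2, 3, 4}" for i
      using that by (intro bounded_linear_coord) auto
    show "(b i has_real_derivative b' i s) (at s)" for i s
      unfolding b_def b'_def \<rho>_def \<mu>_def by (auto intro!: derivative_eq_intros simp: algebra_simps)
    show "b i 0 < coord i (x 0)" if "i \<in> {1, 2, 3, 4}" for i
      using that x0 by (auto simp: b_def \<rho>_def \<mu>_def v_def)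
  next
    fix i s assume i: "i \<in> {1, 2, 3, 4}" and s: "0 < s" "s < T"
      and above: "\<forall>j\<in>{1, 2, 3, 4}. b j s \<le> coord j (x s)" and touch: "coord i (x s) = b i s"
    have "x s \<in> cball dfe (S0 * k / 20)" using near s by (simp add: dist_commute)
    then have y: "x s \<in> cube (S0 * k / 20)" using cball_subset_cube by blast
    note out = growth_cone_outward[OF y pos_\<rho>\<mu>, of s s]
    have ab: "\<rho> s * vE \<le> coord 1 (x s)" "\<rho> s \<le> coord 2 (x s)" "\<rho> s * vR \<le> coord 3 (x s)"
      "\<rho> s * vU + \<mu> s \<le> coord 4 (x s)"
      using above by (simp_all add: b_def v_def)
    have "b' i s < coord i (F (x s))"
      using i touch out[OF ab] by (auto simp: b_def b'_def v_def)
    then show "b' i s < coord i (H (x s))" using agree near s by simp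
  qed simp
  then show ?thesis by (simp add: b_def \<rho>_def v_def)
qed

definition seed :: "real \<Rightarrow> state" where
  "seed r = (S0, 2 * r * vE, 2 * r, 2 * r * vR + r, 2 * r * vU + 2 * r, 0)"

lemma seed_props:
  assumes r: "0 < r"
  shows "dist (seed r) dfe \<le> r * (2 * vE + 2 * vR + 2 * vU + 5)"
    and "r * vE < coord 1 (seed r)" "r < coord 2 (seed r)" "r * vR < coord 3 (seed r)"
    "r * vU + r < coord 4 (seed r)"
proof -
  note w = growth_weights_nonneg
  have "dist (seed r) dfe \<le> (\<Sum>j<6. \<bar>coord j (seed r) - coord j dfe\<bar>)" by (rule dist_le_sum_coords)
  also have "\<dots> = r * (2 * vE + 2 * vR + 2 * vU + 5)"
    using r w by (simp add: seed_def numeral_eq_Suc algebra_simps)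
  finally show "dist (seed r) dfe \<le> r * (2 * vE + 2 * vR + 2 * vU + 5)" .
  have "0 < r * vE" "0 \<le> r * vR" "0 \<le> r * vU" using r w by simp_all
  moreover have "coord 1 (seed r) = 2 * (r * vE)" "coord 2 (seed r) = 2 * r"
    "coord 3 (seed r) = 2 * (r * vR) + r" "coord 4 (seed r) = 2 * (r * vU) + 2 * r"
    by (simp_all add: seed_def)
  ultimately show "r * vE < coord 1 (seed r)" "r < coord 2 (seed r)" "r * vR < coord 3 (seed r)"
    "r * vU + r < coord 4 (seed r)"
    using r by linarith+
qed

lemma solutions_escape:
  assumes agree: "\<And>y. dist y dfe \<le> S0 * k / 20 \<Longrightarrow> G y = F y"
    and r: "0 < r" and x0: "x 0 = seed r" and sol: "solves_on G x {0..}"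
  shows "\<exists>t\<ge>0. S0 * k / 40 \<le> dist (x t) dfe"
proof (rule ccontr)
  define \<epsilon> where "\<epsilon> = S0 * k / 40"
  assume "\<not> (\<exists>t\<ge>0. S0 * k / 40 \<le> dist (x t) dfe)"
  then have near: "dist (x t) dfe < \<epsilon>" if "0 \<le> t" for t using that by (force simp: \<epsilon>_def)
  have \<epsilon>: "0 < \<epsilon>" "\<epsilon> \<le> S0 * k / 20" using S0_pos k by (simp_all add: \<epsilon>_def)
  define t where "t = \<epsilon> / (r * k)"
  have t: "0 \<le> t" using \<epsilon> r k by (simp add: t_def)
  have "solves_on G x {0..<t + 1}" by (rule solves_on_subset[OF sol]) auto
  moreover have "dist (x s) dfe \<le> S0 * k / 20" if "0 \<le> s" for s
    using near[OF that] \<epsilon> by simp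
  ultimately have "r * exp (k * t) < coord 2 (x t)"
    using infected_growth[OF agree _ _ r] seed_props(2-5)[OF r] t by (simp add: x0)
  moreover have "r * (1 + k * t) \<le> r * exp (k * t)" using r by (simp add: exp_ge_add_one_self)
  moreover have "r * (1 + k * t) = r + \<epsilon>" using r k by (simp add: t_def field_simps)
  moreover have "\<bar>coord 2 (x t)\<bar> \<le> dist (x t) dfe" using abs_coord_diff_le_dist[of 2 "x t" dfe] by simp
  ultimately show False using near[OF t] r by linarith
qed

end

context seiruc
begin

theorem unstable_if_R0_gt_1:
  assumes "1 < R0"
  shows "unstable F dfe"
proof -
  obtain k vE vR vU
    where "seiruc_growth_weights Lam beta delta a gamma eta d1 d2 d3 d4 d5 c1 c2 c3 c4 q k vE vR vU"
    using growth_weights_exist[OF assms] .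
  then interpret seiruc_growth_weights Lam beta delta a gamma eta d1 d2 d3 d4 d5 c1 c2 c3 c4 q
    k vE vR vU .
  have \<rho>: "0 < S0 * k / 20" "20 * (S0 * k / 20) \<le> S0" using S0_pos k by auto
  obtain G L where G: "0 < L" "L-lipschitz_on UNIV G" and agree: "\<And>y. dist y dfe \<le> S0 * k / 20 \<Longrightarrow> G y = F y"
    using lipschitz_extension_near_dfe[OF \<rho>(2) less_imp_le[OF \<rho>(1)]] by blast
  have \<epsilon>: "0 < S0 * k / 40" "S0 * k / 40 < S0 * k / 20" using S0_pos k by simp_all
  show ?thesis
  proof (rule unstable_if_escapes[OF G agree \<epsilon>])
    fix d :: real assume "0 < d"
    define m where "m = 2 * vE + 2 * vR + 2 * vU + 5"
    have "0 < m" using growth_weights_nonneg by (simp add: m_def)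
    define r where "r = d / (2 * m)"
    have r: "0 < r" "r * m < d" using \<open>0 < d\<close> \<open>0 < m\<close> by (simp_all add: r_def)
    then have "dist (seed r) dfe < d" using seed_props(1)[OF r(1)] by (simp add: m_def)
    then show "\<exists>x0. dist x0 dfe < d \<and>
        (\<forall>x. x 0 = x0 \<longrightarrow> solves_on G x {0..} \<longrightarrow> (\<exists>t\<ge>0. S0 * k / 40 \<le> dist (x t) dfe))"
      using solutions_escape[OF agree r(1)] by blast
  qed
qed

end

theorem theorem3:
  fixes Lam beta delta a gamma eta d1 d2 d3 d4 d5 c1 c2 c3 c4 q :: real
  assumes "Lam > 0" "beta > 0" "delta > 0" "a > 0" "gamma > 0" "eta > 0"
    "d1 > 0" "d2 > 0" "d3 > 0" "d4 > 0" "d5 > 0"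
    "c1 > 0" "c2 > 0" "c3 > 0" "c4 > 0" "0 \<le> q" "q \<le> 1"
  shows "(seiruc_R0 Lam beta delta a gamma eta d1 d2 d3 d4 c1 c2 c3 c4 q < 1 \<longrightarrow>
           loc_asym_stable (seiruc_rhs Lam beta delta a gamma eta d1 d2 d3 d4 d5 c1 c2 c3 c4 q)
             (Lam / delta, 0, 0, 0, 0, 0)) \<and>
         (seiruc_R0 Lam beta delta a gamma eta d1 d2 d3 d4 c1 c2 c3 c4 q > 1 \<longrightarrow>
           unstable (seiruc_rhs Lam beta delta a gamma eta d1 d2 d3 d4 d5 c1 c2 c3 c4 q)
             (Lam / delta, 0, 0, 0, 0, 0))"
proof -
  interpret seiruc Lam beta delta a gamma eta d1 d2 d3 d4 d5 c1 c2 c3 c4 q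
    using assms by unfold_locales
  have "dfe = (Lam / delta, 0, 0, 0, 0, 0)" by (simp add: S0_def)
  then show ?thesis using loc_asym_stable_if_R0_lt_1 unstable_if_R0_gt_1 by simp
qed

end
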